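(* Let $[X,d,m]$ be a metric random walk space with invariant and reversible probability measure $\nu$, and assume $\Delta_m$ is ergodic. Then: (1) for $K>0$ and $n\in(1,\infty)$, $\Delta_m$ satisfies the integrated Bakry-Émery condition $IBE(K,n)$ if and only if a Poincaré inequality with constant $K\frac{n}{n-1}$ holds; (2) for $K>0$, $\Delta_m$ satisfies $IBE(K,\infty)$ if and only if a Poincaré inequality with constant $K$ holds. Consequently, if $\Delta_m$ satisfies the Bakry-Émery condition $BE(K,n)$ with $K>0$, then ${\rm gap}(-\Delta_m)\ge K\frac n{n-1}$; and if $\Delta_m$ satisfies $BE(K,\infty)$ with $K>0$, then ${\rm gap}(-\Delta_m)\ge K$.
   Context: A metric random walk space $[X,d,m]$ is a Polish metric space $(X,d)$ with a family $m=(m_x)_{x\in X}$ of Borel probability measures, $x\mapsto m_x(A)$ Borel measurable, each with finite first moment. A Radon measure $\nu$ is invariant if $\nu(A)=\int_X m_x(A)d\nu(x)$ for all $\nu$-measurable $A$, reversible if $dm_x(y)d\nu(x)=dm_y(x)d\nu(y)$. $\Delta_m f(x)=\int_X(f(y)-f(x))dm_x(y)$; $\Delta_m$ is ergodic if $\Delta_m u=0$ implies $u$ is $\nu$-a.e. constant. $\mathcal H_m(f)=\frac12\iint(f(y)-f(x))^2dm_x(y)d\nu(x)$, ${\rm Var}_\nu(f)=\int_X(f-\int fd\nu)^2d\nu$, ${\rm gap}(-\Delta_m)=\inf\{\mathcal H_m(f)/{\rm Var}_\nu(f):{\rm Var}_\nu(f)\ne0\}$. A Poincaré inequality with constant $\lambda$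 means $\lambda{\rm Var}_\nu(f)\le\mathcal H_m(f)$ for all $f\in L^2(X,\nu)$. Carré du champ: $\Gamma(f,g)=\frac12(\Delta_m(fg)-f\Delta_m g-g\Delta_m f)$, $\Gamma(f)=\Gamma(f,f)$, $\Gamma_2(f)=\frac12\Delta_m\Gamma(f)-\Gamma(f,\Delta_m f)$. $BE(K,n)$: $\Gamma_2(f)\ge\frac1n(\Delta_m f)^2+K\Gamma(f)$ for all $f\in L^2(X,\nu)$; $BE(K,\infty)$: $\Gamma_2(f)\ge K\Gamma(f)$ for all $f\in L^2(X,\nu)$. $IBE(K,n)$: $K\frac n{n-1}\mathcal H_m(f)\le\int_X(\Delta_m f)^2d\nu$ for all $f\in L^2(X,\nu)$; $IBE(K,\infty)$: $K\mathcal H_m(f)\le\int_X(\Delta_m f)^2d\nu$ for all $f\in L^2(X,\nu)$. *)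

theory Defs
  imports "HOL-Probability.Probability"
begin

definition mrw_space :: "('a::polish_space \<Rightarrow> 'a measure) \<Rightarrow> bool" where
  "mrw_space m \<longleftrightarrow>
     (\<forall>x. prob_space (m x) \<and> sets (m x) = sets borel) \<and>
     (\<forall>A \<in> sets borel. (\<lambda>x. emeasure (m x) A) \<in> borel_measurable borel) \<and>
     (\<forall>x. integrable (m x) (\<lambda>y. dist x y))"

definition invariant_measure :: "('a::polish_space \<Rightarrow> 'a measure) \<Rightarrow> 'a measure \<Rightarrow> bool" where
  "invariant_measure m \<nu> \<longleftrightarrow>
     (\<forall>A \<in> sets \<nu>. emeasure \<nu> A = (\<integral>\<^sup>+ x. emeasure (m x) A \<partial>\<nu>))"

text \<open>Reversibility dm_x(y)d\<nu>(x) = dm_y(x)d\<nu>(y), tested on measurable rectangles A \<times> B.\<close>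
definition reversible_measure :: "('a::polish_space \<Rightarrow> 'a measure) \<Rightarrow> 'a measure \<Rightarrow> bool" where
  "reversible_measure m \<nu> \<longleftrightarrow>
     (\<forall>A \<in> sets \<nu>. \<forall>B \<in> sets \<nu>.
        (\<integral>\<^sup>+ x. indicator A x * emeasure (m x) B \<partial>\<nu>) =
        (\<integral>\<^sup>+ y. indicator B y * emeasure (m y) A \<partial>\<nu>))"

definition L2 :: "'a measure \<Rightarrow> ('a \<Rightarrow> real) set" where
  "L2 \<nu> = {f. f \<in> borel_measurable \<nu> \<and> integrable \<nu> (\<lambda>x. (f x)^2)}"

definition laplacian :: "('a \<Rightarrow> 'a measure) \<Rightarrow> ('a \<Rightarrow> real) \<Rightarrow> 'a \<Rightarrow> real" where
  "laplacian m f x = (\<integral> y. (f y - f x) \<partial>(m x))"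

definition ergodic :: "('a \<Rightarrow> 'a measure) \<Rightarrow> 'a measure \<Rightarrow> bool" where
  "ergodic m \<nu> \<longleftrightarrow>
     (\<forall>u \<in> L2 \<nu>. (AE x in \<nu>. laplacian m u x = 0) \<longrightarrow> (\<exists>c. AE x in \<nu>. u x = c))"

definition H_m :: "('a \<Rightarrow> 'a measure) \<Rightarrow> 'a measure \<Rightarrow> ('a \<Rightarrow> real) \<Rightarrow> real" where
  "H_m m \<nu> f = 1/2 * (\<integral> x. (\<integral> y. (f y - f x)^2 \<partial>(m x)) \<partial>\<nu>)"

definition Var :: "'a measure \<Rightarrow> ('a \<Rightarrow> real) \<Rightarrow> real" where
  "Var \<nu> f = (\<integral> x. (f x - (\<integral> z. f z \<partial>\<nu>))^2 \<partial>\<nu>)"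

text \<open>Spectral gap, as an extended real (infimum of the empty set is +\<infinity>).\<close>
definition gap :: "('a \<Rightarrow> 'a measure) \<Rightarrow> 'a measure \<Rightarrow> ereal" where
  "gap m \<nu> = (INF f \<in> {f \<in> L2 \<nu>. Var \<nu> f \<noteq> 0}. ereal (H_m m \<nu> f / Var \<nu> f))"

definition poincare :: "('a \<Rightarrow> 'a measure) \<Rightarrow> 'a measure \<Rightarrow> real \<Rightarrow> bool" where
  "poincare m \<nu> lam \<longleftrightarrow> (\<forall>f \<in> L2 \<nu>. lam * Var \<nu> f \<le> H_m m \<nu> f)"

definition Gamma :: "('a \<Rightarrow> 'a measure) \<Rightarrow> ('a \<Rightarrow> real) \<Rightarrow> ('a \<Rightarrow> real) \<Rightarrow> 'a \<Rightarrow> real" where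
  "Gamma m f g x = 1/2 * (laplacian m (\<lambda>z. f z * g z) x - f x * laplacian m g x - g x * laplacian m f x)"

definition Gamma2 :: "('a \<Rightarrow> 'a measure) \<Rightarrow> ('a \<Rightarrow> real) \<Rightarrow> 'a \<Rightarrow> real" where
  "Gamma2 m f x = 1/2 * laplacian m (Gamma m f f) x - Gamma m f (laplacian m f) x"

definition BE :: "('a \<Rightarrow> 'a measure) \<Rightarrow> 'a measure \<Rightarrow> real \<Rightarrow> real \<Rightarrow> bool" where
  "BE m \<nu> K n \<longleftrightarrow> (\<forall>f \<in> L2 \<nu>. AE x in \<nu>.
      Gamma2 m f x \<ge> 1/n * (laplacian m f x)^2 + K * Gamma m f f x)"

definition BE_inf :: "('a \<Rightarrow> 'a measure) \<Rightarrow> 'a measure \<Rightarrow> real \<Rightarrow> bool" where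
  "BE_inf m \<nu> K \<longleftrightarrow> (\<forall>f \<in> L2 \<nu>. AE x in \<nu>. Gamma2 m f x \<ge> K * Gamma m f f x)"

definition IBE :: "('a \<Rightarrow> 'a measure) \<Rightarrow> 'a measure \<Rightarrow> real \<Rightarrow> real \<Rightarrow> bool" where
  "IBE m \<nu> K n \<longleftrightarrow> (\<forall>f \<in> L2 \<nu>.
      K * (n / (n - 1)) * H_m m \<nu> f \<le> (\<integral> x. (laplacian m f x)^2 \<partial>\<nu>))"

definition IBE_inf :: "('a \<Rightarrow> 'a measure) \<Rightarrow> 'a measure \<Rightarrow> real \<Rightarrow> bool" where
  "IBE_inf m \<nu> K \<longleftrightarrow> (\<forall>f \<in> L2 \<nu>. K * H_m m \<nu> f \<le> (\<integral> x. (laplacian m f x)^2 \<partial>\<nu>))"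

end

theory Submission
  imports Defs
begin

text \<open>
  Reversibility makes the Markov operator \<open>P f x = \<integral> f dm\<^sub>x\<close> self-adjoint on \<open>L\<^sup>2(\<nu>)\<close>, so that
  \<open>-\<Delta>\<^sub>m = I - P\<close> is a nonnegative self-adjoint operator with spectrum in \<open>[0, 2]\<close> and
  \<open>\<H>\<^sub>m(f) = -\<langle>\<Delta>\<^sub>m f, f\<rangle>\<close>. In spectral terms, \<open>IBE\<close> with constant \<open>\<kappa> = K n / (n - 1)\<close>
  (or \<open>\<kappa> = K\<close>) says that the spectrum of \<open>-\<Delta>\<^sub>m\<close> lies in \<open>{0} \<union> [\<kappa>, \<infinity>)\<close>, and the Poincare
  inequality with constant \<open>\<kappa>\<close> says that it lies in \<open>[\<kappa>, \<infinity>)\<close> on the orthogonal complement of the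
  constants, which by ergodicity is the orthogonal complement of \<open>ker \<Delta>\<^sub>m\<close>.

  Poincare implies \<open>IBE\<close> by expanding \<open>\<parallel>\<kappa> g + \<Delta>\<^sub>m g\<parallel>\<^sup>2 \<ge> 0\<close> for \<open>g = f - \<integral> f d\<nu>\<close>.
  The converse avoids the spectral theorem: for \<open>\<kappa> < 2\<close>, iterating the lazy walk
  \<open>(I + P) / 2 = I + \<Delta>\<^sub>m / 2\<close> on a centred \<open>g\<close> does not increase \<open>\<H>\<^sub>m(g) - \<kappa> \<parallel>g\<parallel>\<^sup>2\<close> and
  contracts \<open>\<H>\<^sub>m\<close> geometrically, so the iterates converge in \<open>L\<^sup>2(\<nu>)\<close> to a centred harmonic
  function, which vanishes by ergodicity; hence \<open>\<H>\<^sub>m(g) \<ge> \<kappa> \<parallel>g\<parallel>\<^sup>2\<close>. Larger \<open>\<kappa>\<close> follow by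
  a limit and the bound \<open>\<parallel>\<Delta>\<^sub>m f\<parallel>\<^sup>2 \<le> 2 \<H>\<^sub>m(f)\<close>. Finally, integrating \<open>BE(K, n)\<close> against \<open>\<nu>\<close>
  gives \<open>IBE(K, n)\<close>, because \<open>\<integral> \<Gamma>(f) d\<nu> = \<H>\<^sub>m(f)\<close> and \<open>\<integral> \<Gamma>\<^sub>2(f) d\<nu> = \<parallel>\<Delta>\<^sub>m f\<parallel>\<^sup>2\<close>.
\<close>

section \<open>Square-integrable functions\<close>

definition L2_inner :: "'a measure \<Rightarrow> ('a \<Rightarrow> real) \<Rightarrow> ('a \<Rightarrow> real) \<Rightarrow> real" where
  "L2_inner M f g = (\<integral>x. f x * g x \<partial>M)"

lemma L2_borel_measurable[measurable_dest]: "f \<in> L2 M \<Longrightarrow> f \<in> borel_measurable M"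
  by (simp add: L2_def)

lemma L2_integrable_square: "f \<in> L2 M \<Longrightarrow> integrable M (\<lambda>x. (f x)\<^sup>2)"
  by (simp add: L2_def)

lemma L2_integrable_mult:
  assumes "f \<in> L2 M" "g \<in> L2 M"
  shows "integrable M (\<lambda>x. f x * g x)"
proof (rule Bochner_Integration.integrable_bound)
  show "integrable M (\<lambda>x. (f x)\<^sup>2 + (g x)\<^sup>2)"
    using assms by (simp add: L2_integrable_square)
  show "(\<lambda>x. f x * g x) \<in> borel_measurable M"
    using assms by measurable
  have "\<bar>f x * g x\<bar> \<le> (f x)\<^sup>2 + (g x)\<^sup>2" for x
  proof -
    have "2 * \<bar>f x * g x\<bar> \<le> (f x)\<^sup>2 + (g x)\<^sup>2"
      using sum_squares_bound[of "\<bar>f x\<bar>" "\<bar>g x\<bar>"] by (simp add: abs_mult power2_eq_square)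
    then show ?thesis
      by simp
  qed
  then show "AE x in M. norm (f x * g x) \<le> norm ((f x)\<^sup>2 + (g x)\<^sup>2)"
    by simp
qed

lemma (in finite_measure) L2_integrable: "f \<in> L2 M \<Longrightarrow> integrable M f"
  by (rule square_integrable_imp_integrable) (simp_all add: L2_def)

lemma L2_add: "f \<in> L2 M \<Longrightarrow> g \<in> L2 M \<Longrightarrow> (\<lambda>x. f x + g x) \<in> L2 M"
  unfolding L2_def by (auto simp: power2_sum intro!: L2_integrable_mult[unfolded L2_def])

lemma L2_mult_const: "f \<in> L2 M \<Longrightarrow> (\<lambda>x. c * f x) \<in> L2 M"
  unfolding L2_def by (auto simp: power_mult_distrib)

lemma L2_diff: "f \<in> L2 M \<Longrightarrow> g \<in> L2 M \<Longrightarrow> (\<lambda>x. f x - g x) \<in> L2 M"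
  using L2_add[of f M "\<lambda>x. (-1) * g x"] L2_mult_const[of g M "-1"] by simp

lemma (in finite_measure) L2_const: "(\<lambda>x. c) \<in> L2 M"
  by (simp add: L2_def)

lemma L2_cong_AE:
  assumes "f \<in> L2 M" "g \<in> borel_measurable M" "AE x in M. f x = g x"
  shows "g \<in> L2 M"
proof -
  have "AE x in M. (f x)\<^sup>2 = (g x)\<^sup>2"
    using assms(3) by eventually_elim simp
  then show ?thesis
    using assms integrable_cong_AE[of "\<lambda>x. (f x)\<^sup>2" M "\<lambda>x. (g x)\<^sup>2"] by (auto simp: L2_def)
qed

lemma L2_inner_commute: "L2_inner M f g = L2_inner M g f"
  by (simp add: L2_inner_def mult.commute)

lemma L2_inner_self: "L2_inner M f f = (\<integral>x. (f x)\<^sup>2 \<partial>M)"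
  by (simp add: L2_inner_def power2_eq_square)

lemma L2_inner_self_nonneg: "0 \<le> L2_inner M f f"
  by (simp add: L2_inner_self)

lemma L2_inner_cong_AE:
  assumes "f \<in> borel_measurable M" "f' \<in> borel_measurable M"
    and "g \<in> borel_measurable M" "g' \<in> borel_measurable M"
    and "AE x in M. f x = f' x" "AE x in M. g x = g' x"
  shows "L2_inner M f g = L2_inner M f' g'"
  unfolding L2_inner_def by (rule integral_cong_AE) (use assms in auto)

lemma L2_inner_linear_combination:
  assumes "f \<in> L2 M" "g \<in> L2 M" "f' \<in> L2 M" "g' \<in> L2 M"
  shows "L2_inner M (\<lambda>x. a * f x + b * g x) (\<lambda>x. c * f' x + d * g' x) =
    a * c * L2_inner M f f' + a * d * L2_inner M f g' + b * c * L2_inner M g f' + b * d * L2_inner M g g'"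
proof -
  have "L2_inner M (\<lambda>x. a * f x + b * g x) (\<lambda>x. c * f' x + d * g' x) =
      (\<integral>x. a * c * (f x * f' x) + a * d * (f x * g' x) + b * c * (g x * f' x) + b * d * (g x * g' x) \<partial>M)"
    unfolding L2_inner_def by (rule Bochner_Integration.integral_cong) (simp_all add: algebra_simps)
  also have "\<dots> = a * c * L2_inner M f f' + a * d * L2_inner M f g' + b * c * L2_inner M g f' + b * d * L2_inner M g g'"
    using assms by (simp add: L2_inner_def L2_integrable_mult)
  finally show ?thesis .
qed

lemma Var_nonneg: "0 \<le> Var \<nu> f"
  by (simp add: Var_def)

lemma (in prob_space) square_integral_le_integral_square:
  fixes f :: "'a \<Rightarrow> real"
  assumes "f \<in> L2 M"
  shows "(\<integral>x. f x \<partial>M)\<^sup>2 \<le> (\<integral>x. (f x)\<^sup>2 \<partial>M)"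
  using variance_eq[of f] variance_positive[of f] assms
  by (simp add: L2_integrable L2_integrable_square)

lemma (in prob_space) integral_tendsto_of_L2_tendsto:
  fixes s :: "nat \<Rightarrow> 'a \<Rightarrow> real"
  assumes "\<And>k. s k \<in> L2 M" "u \<in> L2 M" and lim: "(\<lambda>k. \<integral>x. (s k x - u x)\<^sup>2 \<partial>M) \<longlonglongrightarrow> 0"
  shows "(\<lambda>k. \<integral>x. s k x \<partial>M) \<longlonglongrightarrow> (\<integral>x. u x \<partial>M)"
proof -
  have "((\<integral>x. s k x \<partial>M) - (\<integral>x. u x \<partial>M))\<^sup>2 \<le> (\<integral>x. (s k x - u x)\<^sup>2 \<partial>M)" for k
    using square_integral_le_integral_square[OF L2_diff[OF assms(1,2)]] assms(1,2)
    by (simp add: L2_integrable)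
  then have "(\<lambda>k. ((\<integral>x. s k x \<partial>M) - (\<integral>x. u x \<partial>M))\<^sup>2) \<longlonglongrightarrow> 0"
    by (intro tendsto_sandwich[OF _ _ tendsto_const lim]) auto
  then have "(\<lambda>k. \<bar>(\<integral>x. s k x \<partial>M) - (\<integral>x. u x \<partial>M)\<bar>) \<longlonglongrightarrow> 0"
    using tendsto_real_sqrt by fastforce
  then have "(\<lambda>k. (\<integral>x. s k x \<partial>M) - (\<integral>x. u x \<partial>M)) \<longlonglongrightarrow> 0"
    by (rule tendsto_rabs_zero_cancel)
  then show ?thesis
    by (simp add: LIM_zero_iff)
qed

lemma geometric_tail_bound:
  fixes e :: "nat \<Rightarrow> real"
  assumes e: "\<And>k. \<bar>e k\<bar> \<le> c * w ^ k" and w: "0 \<le> w" "w < 1"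
  shows "summable e" and "\<bar>\<Sum>i. e (i + k)\<bar> \<le> c * w ^ k / (1 - w)"
proof -
  have geom: "summable (\<lambda>i. c * w ^ k * w ^ i)" for k
    using w by (intro summable_mult summable_geometric) simp
  have abs_summable: "summable (\<lambda>i. \<bar>e (i + k)\<bar>)" for k
  proof (rule summable_comparison_test'[OF geom[of k], where N=0])
    show "norm \<bar>e (i + k)\<bar> \<le> c * w ^ k * w ^ i" for i
      using e[of "i + k"] by (simp add: power_add mult_ac)
  qed
  then show "summable e"
    using summable_rabs_cancel[OF abs_summable[of 0]] by simp
  have "\<bar>\<Sum>i. e (i + k)\<bar> \<le> (\<Sum>i. \<bar>e (i + k)\<bar>)"
    by (rule summable_rabs[OF abs_summable])
  also have "\<dots> \<le> (\<Sum>i. c * w ^ k * w ^ i)"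
  proof (rule suminf_le[OF _ abs_summable geom])
    show "\<bar>e (i + k)\<bar> \<le> c * w ^ k * w ^ i" for i
      using e[of "i + k"] by (simp add: power_add mult_ac)
  qed
  also have "\<dots> = c * w ^ k / (1 - w)"
    using w by (simp add: suminf_mult suminf_geometric)
  finally show "\<bar>\<Sum>i. e (i + k)\<bar> \<le> c * w ^ k / (1 - w)" .
qed

lemma summable_integrals_imp_bound:
  fixes F :: "nat \<Rightarrow> 'a \<Rightarrow> real"
  assumes F: "\<And>k. integrable M (F k)" "\<And>k x. 0 \<le> F k x" and sum: "summable (\<lambda>k. \<integral>x. F k x \<partial>M)"
  obtains B where "integrable M B" "\<And>x. 0 \<le> B x" "AE x in M. \<forall>k. F k x \<le> B x"
proof -
  have [measurable]: "F k \<in> borel_measurable M" for k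
    using F(1) by (rule borel_measurable_integrable)
  define S where "S x = (\<Sum>k. ennreal (F k x))" for x
  have [measurable]: "S \<in> borel_measurable M"
    unfolding S_def by measurable
  have "(\<integral>\<^sup>+x. S x \<partial>M) = (\<Sum>k. ennreal (\<integral>x. F k x \<partial>M))"
    unfolding S_def using F by (subst nn_integral_suminf) (simp_all add: nn_integral_eq_integral)
  also have "\<dots> < \<infinity>"
    using sum F(2) by (simp add: suminf_ennreal2 less_top[symmetric])
  finally have S_finite: "(\<integral>\<^sup>+x. S x \<partial>M) < \<infinity>" .
  have "integrable M (\<lambda>x. enn2real (S x))"
  proof (rule integrableI_nonneg)
    show "(\<integral>\<^sup>+x. ennreal (enn2real (S x)) \<partial>M) < \<infinity>"
      using S_finite by (rule le_less_trans[rotated]) (intro nn_integral_mono, simp add: ennreal_enn2real_if)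
  qed auto
  moreover have "AE x in M. S x \<noteq> \<infinity>"
    by (rule nn_integral_PInf_AE) (use S_finite in auto)
  then have "AE x in M. \<forall>k. F k x \<le> enn2real (S x)"
  proof eventually_elim
    case (elim x)
    have "ennreal (F k x) \<le> S x" for k
      unfolding S_def using sum_le_suminf[OF summableI, of "{k}" "\<lambda>k. ennreal (F k x)"] by simp
    also have "S x = ennreal (enn2real (S x))"
      using elim by (simp add: less_top)
    finally show ?case
      by (simp add: ennreal_le_iff)
  qed
  ultimately show ?thesis
    using that by simp
qed

lemma L2_geometric_majorant:
  fixes e :: "nat \<Rightarrow> 'a \<Rightarrow> real"
  assumes e: "\<And>k. e k \<in> L2 M" and q: "0 < q" "q < 1"
    and A: "\<And>k. (\<integral>x. (e k x)\<^sup>2 \<partial>M) \<le> A * q ^ k"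
  obtains b w where "b \<in> L2 M" "0 < w" "w < 1" "AE x in M. \<forall>k. \<bar>e k x\<bar> \<le> b x * w ^ k"
proof -
  define r where "r = sqrt q"
  have r: "0 < r" "r < 1" "q = r * r"
    using q by (auto simp: r_def)
  \<comment> \<open>weighting by \<open>r\<^sup>-\<^sup>k\<close> keeps the series summable while forcing its terms to decay like \<open>r\<^sup>k\<close>\<close>
  have "summable (\<lambda>k. \<integral>x. (e k x)\<^sup>2 / r ^ k \<partial>M)"
  proof (rule summable_comparison_test'[where N=0])
    show "summable (\<lambda>k. A * r ^ k)"
      using r by (intro summable_mult summable_geometric) simp
    show "norm (\<integral>x. (e k x)\<^sup>2 / r ^ k \<partial>M) \<le> A * r ^ k" for k
      using A[of k] r by (simp add: divide_le_eq r(3) power_mult_distrib mult_ac)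
  qed
  then obtain B where B: "integrable M B" "\<And>x. 0 \<le> B x"
    and bound: "AE x in M. \<forall>k. (e k x)\<^sup>2 / r ^ k \<le> B x"
    using summable_integrals_imp_bound[where F="\<lambda>k x. (e k x)\<^sup>2 / r ^ k" and M=M] e r by (auto simp: L2_integrable_square)
  define b where "b x = sqrt (B x)" for x
  have [measurable]: "B \<in> borel_measurable M"
    using B(1) by (rule borel_measurable_integrable)
  have b: "b \<in> L2 M"
    unfolding L2_def b_def using B by simp
  have "AE x in M. \<forall>k. \<bar>e k x\<bar> \<le> b x * sqrt r ^ k"
    using bound
  proof eventually_elim
    case (elim x)
    have "(e k x)\<^sup>2 \<le> B x * r ^ k" for k
      using elim r by (simp add: divide_le_eq)
    then have "sqrt ((e k x)\<^sup>2) \<le> sqrt (B x * r ^ k)" for k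
      by (rule real_sqrt_le_mono)
    then show ?case
      unfolding real_sqrt_abs by (simp add: b_def real_sqrt_mult real_sqrt_power)
  qed
  then show ?thesis
    by (rule that[OF b, rotated 2]) (use r in simp_all)
qed

lemma L2_limit_of_geometric_increments:
  fixes s :: "nat \<Rightarrow> 'a \<Rightarrow> real"
  assumes s: "\<And>k. s k \<in> L2 M" and q: "0 < q" "q < 1"
    and A: "\<And>k. (\<integral>x. (s (Suc k) x - s k x)\<^sup>2 \<partial>M) \<le> A * q ^ k"
  obtains u where "u \<in> L2 M" and "(\<lambda>k. \<integral>x. (s k x - u x)\<^sup>2 \<partial>M) \<longlonglongrightarrow> 0"
proof -
  define e where "e k x = s (Suc k) x - s k x" for k x
  have e: "e k \<in> L2 M" for k
    unfolding e_def by (intro L2_diff s)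
  have "(\<integral>x. (e k x)\<^sup>2 \<partial>M) \<le> A * q ^ k" for k
    using A by (simp add: e_def)
  then obtain b w where b: "b \<in> L2 M" and w: "0 < w" "w < 1"
    and bound: "AE x in M. \<forall>k. \<bar>e k x\<bar> \<le> b x * w ^ k"
    using L2_geometric_majorant[of e M q A] e q by blast
  have [measurable]: "s k \<in> borel_measurable M" "e k \<in> borel_measurable M" for k
    using s e by (simp_all add: L2_borel_measurable)
  define u where "u x = s 0 x + (\<Sum>i. e i x)" for x
  have [measurable]: "u \<in> borel_measurable M"
    unfolding u_def by measurable
  define c where "c k = (w\<^sup>2) ^ k / (1 - w)\<^sup>2" for k
  have tail: "AE x in M. \<forall>k. (s k x - u x)\<^sup>2 \<le> (b x)\<^sup>2 * c k"
    using bound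
  proof eventually_elim
    case (elim x)
    show ?case
    proof
      fix k
      have "summable (\<lambda>i. e i x)" and tail_le: "\<bar>\<Sum>i. e (i + k) x\<bar> \<le> b x * w ^ k / (1 - w)"
        using geometric_tail_bound[of "\<lambda>i. e i x" "b x" w] elim w by auto
      moreover have "s k x = s 0 x + (\<Sum>i<k. e i x)"
        unfolding e_def by (subst sum_lessThan_telescope) simp
      ultimately have "u x - s k x = (\<Sum>i. e (i + k) x)"
        by (simp add: u_def suminf_split_initial_segment[of _ k])
      then have "\<bar>s k x - u x\<bar> \<le> b x * w ^ k / (1 - w)"
        using tail_le by (simp add: abs_minus_commute)
      then have "(s k x - u x)\<^sup>2 \<le> (b x * w ^ k / (1 - w))\<^sup>2"
        using power_mono[of "\<bar>s k x - u x\<bar>" _ 2] by simp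
      also have "\<dots> = (b x)\<^sup>2 * c k"
        by (simp add: c_def power_divide power_mult_distrib power2_eq_square)
      finally show "(s k x - u x)\<^sup>2 \<le> (b x)\<^sup>2 * c k" .
    qed
  qed
  have dominant: "integrable M (\<lambda>x. (b x)\<^sup>2 * c k)" for k
    using L2_integrable_square[OF b] by simp
  have diff_L2: "(\<lambda>x. s k x - u x) \<in> L2 M" for k
  proof -
    have "integrable M (\<lambda>x. (s k x - u x)\<^sup>2)"
    proof (rule Bochner_Integration.integrable_bound[OF dominant[of k]])
      show "AE x in M. norm ((s k x - u x)\<^sup>2) \<le> norm ((b x)\<^sup>2 * c k)"
        using tail by eventually_elim (auto simp: c_def)
    qed simp
    then show ?thesis
      by (simp add: L2_def)
  qed
  have "u \<in> L2 M"
    using L2_diff[OF s[of 0] diff_L2[of 0]] by simp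
  moreover have "(\<lambda>k. \<integral>x. (s k x - u x)\<^sup>2 \<partial>M) \<longlonglongrightarrow> 0"
  proof (rule tendsto_sandwich[OF _ _ tendsto_const])
    show "\<forall>\<^sub>F k in sequentially. 0 \<le> (\<integral>x. (s k x - u x)\<^sup>2 \<partial>M)"
      by simp
    have "(\<integral>x. (s k x - u x)\<^sup>2 \<partial>M) \<le> (\<integral>x. (b x)\<^sup>2 * c k \<partial>M)" for k
    proof (rule integral_mono_AE[OF L2_integrable_square[OF diff_L2] dominant])
      show "AE x in M. (s k x - u x)\<^sup>2 \<le> (b x)\<^sup>2 * c k"
        using tail by eventually_elim blast
    qed
    then show "\<forall>\<^sub>F k in sequentially. (\<integral>x. (s k x - u x)\<^sup>2 \<partial>M) \<le> (\<integral>x. (b x)\<^sup>2 \<partial>M) * c k"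
      by simp
    have "(\<lambda>k. (\<integral>x. (b x)\<^sup>2 \<partial>M) / (1 - w)\<^sup>2 * (w\<^sup>2) ^ k) \<longlonglongrightarrow> 0"
      using w by (intro tendsto_mult_right_zero LIMSEQ_power_zero) (simp add: power_less_one_iff)
    then show "(\<lambda>k. (\<integral>x. (b x)\<^sup>2 \<partial>M) * c k) \<longlonglongrightarrow> 0"
      by (simp add: c_def)
  qed
  ultimately show ?thesis
    by (rule that)
qed

section \<open>Reversible random walks and their two-step law\<close>

locale reversible_mrw_space =
  fixes m :: "'a::polish_space \<Rightarrow> 'a measure" and \<nu> :: "'a measure"
  assumes mrw_space: "mrw_space m"
    and prob_space_\<nu>: "prob_space \<nu>" and sets_\<nu>: "sets \<nu> = sets borel"
    and invariant: "invariant_measure m \<nu>" and reversible: "reversible_measure m \<nu>"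
begin

declare sets_\<nu>[measurable_cong]

lemma prob_space_m: "prob_space (m x)"
  using mrw_space by (simp add: mrw_space_def)

lemma sets_m[measurable_cong]: "sets (m x) = sets borel"
  using mrw_space by (simp add: mrw_space_def)

lemma space_m[simp]: "space (m x) = UNIV"
  using sets_eq_imp_space_eq[OF sets_m] by simp

lemma space_\<nu>[simp]: "space \<nu> = UNIV"
  using sets_eq_imp_space_eq[OF sets_\<nu>] by simp

lemma measurable_\<nu>[simp]: "measurable \<nu> N = measurable borel N"
  by (rule measurable_cong_sets[OF sets_\<nu> refl])

lemma measurable_m[simp]: "measurable (m x) N = measurable borel N"
  by (rule measurable_cong_sets[OF sets_m refl])

lemma measure_m_UNIV[simp]: "measure (m x) UNIV = 1"
  using prob_space.prob_space[OF prob_space_m] by simp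

lemma measure_\<nu>_UNIV[simp]: "measure \<nu> UNIV = 1"
  using prob_space.prob_space[OF prob_space_\<nu>] by simp

lemma finite_measure_\<nu>: "finite_measure \<nu>"
  using prob_space_\<nu> by (rule prob_space.axioms)

lemma measurable_kernel[measurable]: "m \<in> borel \<rightarrow>\<^sub>M subprob_algebra borel"
proof (rule measurable_subprob_algebra)
  show "subprob_space (m x)" for x
    using prob_space_m by (rule prob_space_imp_subprob_space)
  show "(\<lambda>x. emeasure (m x) A) \<in> borel_measurable borel" if "A \<in> sets borel" for A
    using mrw_space that by (simp add: mrw_space_def)
qed (rule sets_m)

definition pair_kernel :: "'a \<Rightarrow> ('a \<times> 'a) measure" where
  "pair_kernel x = distr (m x) (borel \<Otimes>\<^sub>M borel) (Pair x)"

lemma measurable_pair_kernel[measurable]: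
  "pair_kernel \<in> borel \<rightarrow>\<^sub>M subprob_algebra (borel \<Otimes>\<^sub>M borel)"
  unfolding pair_kernel_def by (rule measurable_distr2[OF _ measurable_kernel]) simp

lemma integral_pair_kernel:
  fixes G :: "'a \<times> 'a \<Rightarrow> real"
  assumes [measurable]: "G \<in> borel_measurable (borel \<Otimes>\<^sub>M borel)"
  shows "(\<integral>z. G z \<partial>pair_kernel x) = (\<integral>y. G (x, y) \<partial>m x)"
  unfolding pair_kernel_def by (subst integral_distr) auto

text \<open>The joint law \<open>d\<nu>(x) dm\<^sub>x(y)\<close> of two consecutive steps of the stationary walk.\<close>

definition joint :: "('a \<times> 'a) measure" where
  "joint = \<nu> \<bind> pair_kernel"

lemma sets_joint[measurable_cong]: "sets joint = sets (borel \<Otimes>\<^sub>M borel)"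
  unfolding joint_def by (subst sets_bind[where N="borel \<Otimes>\<^sub>M borel"]) (auto simp: pair_kernel_def)

lemma space_joint[simp]: "space joint = UNIV"
  using sets_eq_imp_space_eq[OF sets_joint] by (simp add: space_pair_measure)

lemma measurable_joint[simp]: "measurable joint N = measurable (borel \<Otimes>\<^sub>M borel) N"
  by (rule measurable_cong_sets[OF sets_joint refl])

lemma nn_integral_joint:
  assumes [measurable]: "G \<in> borel_measurable (borel \<Otimes>\<^sub>M borel)"
  shows "(\<integral>\<^sup>+z. G z \<partial>joint) = (\<integral>\<^sup>+x. \<integral>\<^sup>+y. G (x, y) \<partial>m x \<partial>\<nu>)"
proof -
  have "(\<integral>\<^sup>+z. G z \<partial>joint) = (\<integral>\<^sup>+x. \<integral>\<^sup>+z. G z \<partial>pair_kernel x \<partial>\<nu>)"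
    unfolding joint_def by (rule nn_integral_bind[where B="borel \<Otimes>\<^sub>M borel"]) auto
  also have "\<dots> = (\<integral>\<^sup>+x. \<integral>\<^sup>+y. G (x, y) \<partial>m x \<partial>\<nu>)"
    unfolding pair_kernel_def by (intro nn_integral_cong, subst nn_integral_distr) auto
  finally show ?thesis .
qed

lemma emeasure_joint_Times:
  assumes [measurable]: "A \<in> sets borel" "B \<in> sets borel"
  shows "emeasure joint (A \<times> B) = (\<integral>\<^sup>+x. indicator A x * emeasure (m x) B \<partial>\<nu>)"
proof -
  have "emeasure joint (A \<times> B) = (\<integral>\<^sup>+z. indicator (A \<times> B) z \<partial>joint)"
    by (simp add: sets_joint)
  also have "\<dots> = (\<integral>\<^sup>+x. \<integral>\<^sup>+y. indicator A x * indicator B y \<partial>m x \<partial>\<nu>)"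
    by (subst nn_integral_joint) (auto simp: indicator_times)
  also have "\<dots> = (\<integral>\<^sup>+x. indicator A x * emeasure (m x) B \<partial>\<nu>)"
    by (intro nn_integral_cong) (simp add: nn_integral_cmult sets_m)
  finally show ?thesis .
qed

lemma distr_joint_swap: "distr joint (borel \<Otimes>\<^sub>M borel) (\<lambda>(x, y). (y, x)) = joint"
proof (rule measure_eqI_generator_eq_countable[OF Int_stable_pair_measure_generator[of borel borel]])
  let ?E = "{a \<times> b |a b. a \<in> sets (borel :: 'a measure) \<and> b \<in> sets (borel :: 'a measure)}"
  show "?E \<subseteq> Pow UNIV" "sets (distr joint (borel \<Otimes>\<^sub>M borel) (\<lambda>(x, y). (y, x))) = sigma_sets UNIV ?E"
    "sets joint = sigma_sets UNIV ?E"
    by (simp_all add: sets_joint sets_pair_measure)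
  have "UNIV \<in> sets (borel :: 'a measure)"
    by simp
  then show "{UNIV \<times> UNIV} \<subseteq> ?E"
    by blast
  show "\<Union>{UNIV \<times> UNIV} = UNIV" "countable {UNIV \<times> UNIV}"
    by auto
  show "emeasure (distr joint (borel \<Otimes>\<^sub>M borel) (\<lambda>(x, y). (y, x))) a \<noteq> \<infinity>"
    if "a \<in> {UNIV \<times> UNIV}" for a
  proof -
    have "emeasure joint (UNIV \<times> UNIV) = 1"
      using emeasure_joint_Times[of UNIV UNIV] prob_space.emeasure_space_1[OF prob_space_\<nu>]
      by (simp add: prob_space.emeasure_space_1[OF prob_space_m, simplified])
    then show ?thesis
      using that sets.top[of "borel \<Otimes>\<^sub>M borel"]
      by (subst emeasure_distr) (auto simp: space_pair_measure)
  qed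
  fix X assume "X \<in> ?E"
  then obtain A B where X: "X = A \<times> B" and [measurable]: "A \<in> sets borel" "B \<in> sets borel"
    by auto
  have "emeasure (distr joint (borel \<Otimes>\<^sub>M borel) (\<lambda>(x, y). (y, x))) X = emeasure joint (B \<times> A)"
    by (subst emeasure_distr) (auto simp: X intro!: arg_cong[where f="emeasure joint"])
  also have "\<dots> = emeasure joint X"
    using reversible by (simp add: X emeasure_joint_Times reversible_measure_def sets_\<nu>)
  finally show "emeasure (distr joint (borel \<Otimes>\<^sub>M borel) (\<lambda>(x, y). (y, x))) X = emeasure joint X" .
qed

lemma integral_joint_swap:
  fixes G :: "'a \<times> 'a \<Rightarrow> real"
  assumes [measurable]: "G \<in> borel_measurable (borel \<Otimes>\<^sub>M borel)"
  shows "(\<integral>z. G (snd z, fst z) \<partial>joint) = (\<integral>z. G z \<partial>joint)"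
  using integral_distr[of "\<lambda>(x, y). (y, x)" joint "borel \<Otimes>\<^sub>M borel" G]
  by (simp add: distr_joint_swap case_prod_beta)

lemma distr_joint_fst: "distr joint borel fst = \<nu>"
proof (rule measure_eqI)
  fix A assume "A \<in> sets (distr joint borel fst)"
  then have [measurable]: "A \<in> sets borel"
    by simp
  have "emeasure (distr joint borel fst) A = (\<integral>\<^sup>+z. indicator A (fst z) \<partial>joint)"
    using nn_integral_distr[of fst joint borel "indicator A"] by simp
  also have "\<dots> = emeasure \<nu> A"
    by (subst nn_integral_joint) (simp_all add: prob_space.emeasure_space_1[OF prob_space_m, simplified] sets_\<nu>)
  finally show "emeasure (distr joint borel fst) A = emeasure \<nu> A" .
qed (simp add: sets_\<nu>)

lemma distr_joint_snd: "distr joint borel snd = \<nu>"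
proof (rule measure_eqI)
  fix A assume "A \<in> sets (distr joint borel snd)"
  then have [measurable]: "A \<in> sets borel"
    by simp
  have "emeasure (distr joint borel snd) A = (\<integral>\<^sup>+z. indicator A (snd z) \<partial>joint)"
    using nn_integral_distr[of snd joint borel "indicator A"] by simp
  also have "\<dots> = emeasure \<nu> A"
    using invariant by (subst nn_integral_joint) (simp_all add: invariant_measure_def sets_\<nu>)
  finally show "emeasure (distr joint borel snd) A = emeasure \<nu> A" .
qed (simp add: sets_\<nu>)

lemma
  fixes h :: "'a \<Rightarrow> real"
  assumes [measurable]: "h \<in> borel_measurable borel"
  shows integrable_joint_fst: "integrable joint (\<lambda>z. h (fst z)) \<longleftrightarrow> integrable \<nu> h"
    and integral_joint_fst: "(\<integral>z. h (fst z) \<partial>joint) = (\<integral>x. h x \<partial>\<nu>)"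
    and integrable_joint_snd: "integrable joint (\<lambda>z. h (snd z)) \<longleftrightarrow> integrable \<nu> h"
    and integral_joint_snd: "(\<integral>z. h (snd z) \<partial>joint) = (\<integral>x. h x \<partial>\<nu>)"
  using integrable_distr_eq[of fst joint borel h] integral_distr[of fst joint borel h]
    integrable_distr_eq[of snd joint borel h] integral_distr[of snd joint borel h]
  by (simp_all add: distr_joint_fst distr_joint_snd)

lemma
  assumes "f \<in> L2 \<nu>"
  shows L2_joint_fst: "(\<lambda>z. f (fst z)) \<in> L2 joint"
    and L2_joint_snd: "(\<lambda>z. f (snd z)) \<in> L2 joint"
proof -
  have [measurable]: "f \<in> borel_measurable borel"
    using assms by (simp add: L2_def)
  show "(\<lambda>z. f (fst z)) \<in> L2 joint" "(\<lambda>z. f (snd z)) \<in> L2 joint"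
    using assms integrable_joint_fst[of "\<lambda>x. (f x)\<^sup>2"] integrable_joint_snd[of "\<lambda>x. (f x)\<^sup>2"]
    by (simp_all add: L2_def)
qed

lemma measurable_integral_kernel[measurable]:
  fixes G :: "'a \<times> 'a \<Rightarrow> real"
  assumes [measurable]: "G \<in> borel_measurable (borel \<Otimes>\<^sub>M borel)"
  shows "(\<lambda>x. \<integral>y. G (x, y) \<partial>m x) \<in> borel_measurable borel"
  using measurable_compose[OF measurable_pair_kernel integral_measurable_subprob_algebra[of G]]
  by (simp add: integral_pair_kernel)

lemma measurable_nn_integral_kernel[measurable]:
  assumes [measurable]: "G \<in> borel_measurable (borel \<Otimes>\<^sub>M borel)"
  shows "(\<lambda>x. \<integral>\<^sup>+y. G (x, y) \<partial>m x) \<in> borel_measurable borel"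
  by (rule nn_integral_measurable_subprob_algebra2[OF _ measurable_kernel]) simp

lemma AE_integrable_of_integrable_joint:
  fixes G :: "'a \<times> 'a \<Rightarrow> real"
  assumes "integrable joint G"
  shows "AE x in \<nu>. integrable (m x) (\<lambda>y. G (x, y))"
proof -
  have [measurable]: "G \<in> borel_measurable (borel \<Otimes>\<^sub>M borel)"
    using borel_measurable_integrable[OF assms] by simp
  have "(\<integral>\<^sup>+x. \<integral>\<^sup>+y. norm (G (x, y)) \<partial>m x \<partial>\<nu>) = (\<integral>\<^sup>+z. norm (G z) \<partial>joint)"
    by (rule nn_integral_joint[symmetric]) simp
  then have "(\<integral>\<^sup>+x. \<integral>\<^sup>+y. norm (G (x, y)) \<partial>m x \<partial>\<nu>) \<noteq> \<infinity>"
    using assms by (simp add: integrable_iff_bounded)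
  then have "AE x in \<nu>. (\<integral>\<^sup>+y. norm (G (x, y)) \<partial>m x) \<noteq> \<infinity>"
    by (intro nn_integral_PInf_AE) simp_all
  then show ?thesis
    by eventually_elim (simp add: integrable_iff_bounded top.not_eq_extremum)
qed

lemma integrable_integral_kernel:
  fixes G :: "'a \<times> 'a \<Rightarrow> real"
  assumes "integrable joint G"
  shows "integrable \<nu> (\<lambda>x. \<integral>y. G (x, y) \<partial>m x)"
proof (rule integrableI_bounded)
  have [measurable]: "G \<in> borel_measurable (borel \<Otimes>\<^sub>M borel)"
    using borel_measurable_integrable[OF assms] by simp
  show "(\<lambda>x. \<integral>y. G (x, y) \<partial>m x) \<in> borel_measurable \<nu>"
    by simp
  have "(\<integral>\<^sup>+x. norm (\<integral>y. G (x, y) \<partial>m x) \<partial>\<nu>) \<le> (\<integral>\<^sup>+x. \<integral>\<^sup>+y. norm (G (x, y)) \<partial>m x \<partial>\<nu>)"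
  proof (intro nn_integral_mono)
    show "ennreal (norm (\<integral>y. G (x, y) \<partial>m x)) \<le> (\<integral>\<^sup>+y. norm (G (x, y)) \<partial>m x)" for x
      using integral_norm_bound_ennreal[of "m x" "\<lambda>y. G (x, y)"]
      by (cases "integrable (m x) (\<lambda>y. G (x, y))") (simp_all add: not_integrable_integral_eq)
  qed
  also have "\<dots> = (\<integral>\<^sup>+z. norm (G z) \<partial>joint)"
    by (rule nn_integral_joint[symmetric]) simp
  also have "\<dots> < \<infinity>"
    using assms by (simp add: integrable_iff_bounded)
  finally show "(\<integral>\<^sup>+x. norm (\<integral>y. G (x, y) \<partial>m x) \<partial>\<nu>) < \<infinity>" .
qed

lemma integral_joint_nonneg:
  fixes G :: "'a \<times> 'a \<Rightarrow> real"
  assumes "integrable joint G" and nonneg: "\<And>z. 0 \<le> G z"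
  shows "(\<integral>x. \<integral>y. G (x, y) \<partial>m x \<partial>\<nu>) = (\<integral>z. G z \<partial>joint)"
proof -
  have [measurable]: "G \<in> borel_measurable (borel \<Otimes>\<^sub>M borel)"
    using borel_measurable_integrable[OF assms(1)] by simp
  have "AE x in \<nu>. (\<integral>\<^sup>+y. G (x, y) \<partial>m x) = ennreal (\<integral>y. G (x, y) \<partial>m x)"
    using AE_integrable_of_integrable_joint[OF assms(1)]
    by eventually_elim (simp add: nn_integral_eq_integral nonneg)
  then have nn_eq: "(\<integral>\<^sup>+z. G z \<partial>joint) = (\<integral>\<^sup>+x. ennreal (\<integral>y. G (x, y) \<partial>m x) \<partial>\<nu>)"
    by (simp add: nn_integral_joint nn_integral_cong_AE)
  have "(\<integral>z. G z \<partial>joint) = enn2real (\<integral>\<^sup>+z. G z \<partial>joint)"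
    by (rule integral_eq_nn_integral) (simp_all add: nonneg)
  also have "\<dots> = (\<integral>x. \<integral>y. G (x, y) \<partial>m x \<partial>\<nu>)"
    unfolding nn_eq by (rule integral_eq_nn_integral[symmetric]) (simp_all add: nonneg)
  finally show ?thesis ..
qed

lemma integral_joint:
  fixes G :: "'a \<times> 'a \<Rightarrow> real"
  assumes G: "integrable joint G"
  shows "(\<integral>x. \<integral>y. G (x, y) \<partial>m x \<partial>\<nu>) = (\<integral>z. G z \<partial>joint)"
proof -
  define Gp Gn where "Gp z = max (G z) 0" and "Gn z = max (- G z) 0" for z
  have int: "integrable joint Gp" "integrable joint Gn"
    using G unfolding Gp_def Gn_def by auto
  have [measurable]: "G \<in> borel_measurable (borel \<Otimes>\<^sub>M borel)"
    "Gp \<in> borel_measurable (borel \<Otimes>\<^sub>M borel)" "Gn \<in> borel_measurable (borel \<Otimes>\<^sub>M borel)"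
    using G int by (simp_all add: borel_measurable_integrable)
  have AE_eq: "AE x in \<nu>. (\<integral>y. G (x, y) \<partial>m x) = (\<integral>y. Gp (x, y) \<partial>m x) - (\<integral>y. Gn (x, y) \<partial>m x)"
    using AE_integrable_of_integrable_joint[OF G]
  proof eventually_elim
    case (elim x)
    have "(\<integral>y. G (x, y) \<partial>m x) = (\<integral>y. Gp (x, y) - Gn (x, y) \<partial>m x)"
      by (rule Bochner_Integration.integral_cong) (auto simp: Gp_def Gn_def max_def)
    also have "\<dots> = (\<integral>y. Gp (x, y) \<partial>m x) - (\<integral>y. Gn (x, y) \<partial>m x)"
      using elim unfolding Gp_def Gn_def by (intro Bochner_Integration.integral_diff) auto
    finally show ?case .
  qed
  have "(\<integral>x. \<integral>y. G (x, y) \<partial>m x \<partial>\<nu>) = (\<integral>x. (\<integral>y. Gp (x, y) \<partial>m x) - (\<integral>y. Gn (x, y) \<partial>m x) \<partial>\<nu>)"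
    by (rule integral_cong_AE[OF _ _ AE_eq]) measurable
  also have "\<dots> = (\<integral>x. \<integral>y. Gp (x, y) \<partial>m x \<partial>\<nu>) - (\<integral>x. \<integral>y. Gn (x, y) \<partial>m x \<partial>\<nu>)"
    using integrable_integral_kernel[OF int(1)] integrable_integral_kernel[OF int(2)] by simp
  also have "\<dots> = (\<integral>z. Gp z \<partial>joint) - (\<integral>z. Gn z \<partial>joint)"
    using integral_joint_nonneg[OF int(1)] integral_joint_nonneg[OF int(2)] by (simp add: Gp_def Gn_def)
  also have "\<dots> = (\<integral>z. G z \<partial>joint)"
    using int by (simp flip: Bochner_Integration.integral_diff)
      (auto simp: Gp_def Gn_def max_def intro: Bochner_Integration.integral_cong)
  finally show ?thesis .
qed

section \<open>The Markov operator, the Laplacian and the Dirichlet form\<close>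

definition P :: "('a \<Rightarrow> real) \<Rightarrow> 'a \<Rightarrow> real" where
  "P f x = (\<integral>y. f y \<partial>m x)"

lemma L2_\<nu>_borel_measurable: "f \<in> L2 \<nu> \<Longrightarrow> f \<in> borel_measurable borel"
  by (simp add: L2_def)

lemma measurable_P[measurable]: "h \<in> borel_measurable borel \<Longrightarrow> P h \<in> borel_measurable borel"
  unfolding P_def using measurable_integral_kernel[of "\<lambda>z. h (snd z)"] by simp

lemma measurable_laplacian[measurable]:
  "h \<in> borel_measurable borel \<Longrightarrow> laplacian m h \<in> borel_measurable borel"
  unfolding laplacian_def using measurable_integral_kernel[of "\<lambda>z. h (snd z) - h (fst z)"] by simp

lemma
  fixes h :: "'a \<Rightarrow> real"
  assumes "integrable \<nu> h"
  shows AE_integrable_kernel: "AE x in \<nu>. integrable (m x) h"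
    and integrable_P: "integrable \<nu> (P h)"
    and integral_P: "(\<integral>x. P h x \<partial>\<nu>) = (\<integral>x. h x \<partial>\<nu>)"
proof -
  have [measurable]: "h \<in> borel_measurable borel"
    using borel_measurable_integrable[OF assms] by simp
  have h: "integrable joint (\<lambda>z. h (snd z))"
    using assms by (simp add: integrable_joint_snd)
  show "AE x in \<nu>. integrable (m x) h"
    using AE_integrable_of_integrable_joint[OF h] by simp
  show "integrable \<nu> (P h)"
    using integrable_integral_kernel[OF h] by (simp add: P_def[abs_def])
  show "(\<integral>x. P h x \<partial>\<nu>) = (\<integral>x. h x \<partial>\<nu>)"
    using integral_joint[OF h] by (simp add: P_def integral_joint_snd)
qed

lemma laplacian_AE_eq:
  fixes h :: "'a \<Rightarrow> real"
  assumes "integrable \<nu> h"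
  shows "AE x in \<nu>. laplacian m h x = P h x - h x"
  using AE_integrable_kernel[OF assms]
proof eventually_elim
  case (elim x)
  interpret prob_space "m x"
    by (rule prob_space_m)
  show ?case
    using elim by (simp add: laplacian_def P_def prob_space)
qed

lemma
  fixes h :: "'a \<Rightarrow> real"
  assumes "integrable \<nu> h"
  shows integrable_laplacian: "integrable \<nu> (laplacian m h)"
    and integral_laplacian: "(\<integral>x. laplacian m h x \<partial>\<nu>) = 0"
proof -
  have [measurable]: "h \<in> borel_measurable borel"
    using borel_measurable_integrable[OF assms] by simp
  have "integrable \<nu> (\<lambda>x. P h x - h x)"
    using integrable_P[OF assms] assms by simp
  then show "integrable \<nu> (laplacian m h)"
    using integrable_cong_AE[of "laplacian m h" \<nu> "\<lambda>x. P h x - h x"] laplacian_AE_eq[OF assms] by simp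
  have "(\<integral>x. laplacian m h x \<partial>\<nu>) = (\<integral>x. P h x - h x \<partial>\<nu>)"
    by (rule integral_cong_AE) (simp_all add: laplacian_AE_eq[OF assms])
  also have "\<dots> = 0"
    using integrable_P[OF assms] integral_P[OF assms] assms by simp
  finally show "(\<integral>x. laplacian m h x \<partial>\<nu>) = 0" .
qed

lemma
  assumes f: "f \<in> L2 \<nu>"
  shows P_L2: "P f \<in> L2 \<nu>"
    and L2_inner_P_le: "L2_inner \<nu> (P f) (P f) \<le> L2_inner \<nu> f f"
proof -
  have [measurable]: "f \<in> borel_measurable borel"
    using f by (simp add: L2_def)
  have f2: "integrable \<nu> (\<lambda>x. (f x)\<^sup>2)"
    using f by (rule L2_integrable_square)
  have jensen: "AE x in \<nu>. (P f x)\<^sup>2 \<le> P (\<lambda>y. (f y)\<^sup>2) x"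
    using AE_integrable_kernel[OF f2]
  proof eventually_elim
    case (elim x)
    then show ?case
      unfolding P_def by (intro prob_space.square_integral_le_integral_square prob_space_m) (simp add: L2_def)
  qed
  have Pf2: "integrable \<nu> (\<lambda>x. (P f x)\<^sup>2)"
  proof (rule Bochner_Integration.integrable_bound[OF integrable_P[OF f2]])
    show "AE x in \<nu>. norm ((P f x)\<^sup>2) \<le> norm (P (\<lambda>y. (f y)\<^sup>2) x)"
      using jensen by eventually_elim auto
  qed simp
  then show "P f \<in> L2 \<nu>"
    by (simp add: L2_def)
  have "(\<integral>x. (P f x)\<^sup>2 \<partial>\<nu>) \<le> (\<integral>x. P (\<lambda>y. (f y)\<^sup>2) x \<partial>\<nu>)"
    by (rule integral_mono_AE[OF Pf2 integrable_P[OF f2] jensen])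
  then show "L2_inner \<nu> (P f) (P f) \<le> L2_inner \<nu> f f"
    by (simp add: L2_inner_self integral_P[OF f2])
qed

lemma L2_inner_P_eq_joint:
  assumes "f \<in> L2 \<nu>" "g \<in> L2 \<nu>"
  shows "L2_inner \<nu> g (P f) = (\<integral>z. g (fst z) * f (snd z) \<partial>joint)"
proof -
  have [measurable]: "f \<in> borel_measurable borel" "g \<in> borel_measurable borel"
    using assms by (simp_all add: L2_def)
  have "integrable joint (\<lambda>z. g (fst z) * f (snd z))"
    using assms by (intro L2_integrable_mult L2_joint_fst L2_joint_snd)
  from integral_joint[OF this] show ?thesis
    by (simp add: L2_inner_def P_def)
qed

lemma P_self_adjoint:
  assumes "f \<in> L2 \<nu>" "g \<in> L2 \<nu>"
  shows "L2_inner \<nu> g (P f) = L2_inner \<nu> f (P g)"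
proof -
  have [measurable]: "f \<in> borel_measurable borel" "g \<in> borel_measurable borel"
    using assms by (simp_all add: L2_def)
  show ?thesis
    using integral_joint_swap[of "\<lambda>z. g (fst z) * f (snd z)"]
    by (simp add: L2_inner_P_eq_joint assms mult.commute)
qed

lemma laplacian_L2_AE_eq: "f \<in> L2 \<nu> \<Longrightarrow> AE x in \<nu>. laplacian m f x = P f x - f x"
  by (rule laplacian_AE_eq[OF finite_measure.L2_integrable[OF finite_measure_\<nu>]])

lemma laplacian_L2:
  assumes "f \<in> L2 \<nu>"
  shows "laplacian m f \<in> L2 \<nu>"
proof (rule L2_cong_AE[OF L2_diff[OF P_L2[OF assms] assms]])
  show "laplacian m f \<in> borel_measurable \<nu>"
    using assms by (simp add: L2_\<nu>_borel_measurable measurable_laplacian)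
  show "AE x in \<nu>. P f x - f x = laplacian m f x"
    using laplacian_L2_AE_eq[OF assms] by auto
qed

lemma L2_inner_laplacian_left:
  assumes "f \<in> L2 \<nu>" "g \<in> L2 \<nu>"
  shows "L2_inner \<nu> (laplacian m f) g = L2_inner \<nu> (P f) g - L2_inner \<nu> f g"
proof -
  have "L2_inner \<nu> (laplacian m f) g = L2_inner \<nu> (\<lambda>x. 1 * P f x + (-1) * f x) (\<lambda>x. 1 * g x + 0 * g x)"
    using assms laplacian_L2_AE_eq[OF assms(1)] laplacian_L2[OF assms(1)] P_L2[OF assms(1)]
    by (intro L2_inner_cong_AE) (auto intro: L2_\<nu>_borel_measurable L2_diff)
  also have "\<dots> = L2_inner \<nu> (P f) g - L2_inner \<nu> f g"
    using L2_inner_linear_combination[of "P f" \<nu> f g g 1 "-1" 1 0] assms P_L2[OF assms(1)] by simp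
  finally show ?thesis .
qed

lemma laplacian_self_adjoint:
  assumes "f \<in> L2 \<nu>" "g \<in> L2 \<nu>"
  shows "L2_inner \<nu> (laplacian m f) g = L2_inner \<nu> f (laplacian m g)"
  using L2_inner_laplacian_left[OF assms] L2_inner_laplacian_left[OF assms(2,1)] P_self_adjoint[OF assms(2,1)]
  by (simp add: L2_inner_commute)

lemma laplacian_linear:
  assumes "f \<in> L2 \<nu>" "g \<in> L2 \<nu>"
  shows "AE x in \<nu>. laplacian m (\<lambda>x. a * f x + b * g x) x = a * laplacian m f x + b * laplacian m g x"
  using AE_integrable_kernel[OF finite_measure.L2_integrable[OF finite_measure_\<nu> assms(1)]]
    AE_integrable_kernel[OF finite_measure.L2_integrable[OF finite_measure_\<nu> assms(2)]]
proof eventually_elim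
  case (elim x)
  interpret prob_space "m x"
    by (rule prob_space_m)
  have "laplacian m (\<lambda>x. a * f x + b * g x) x = (\<integral>y. a * (f y - f x) + b * (g y - g x) \<partial>m x)"
    unfolding laplacian_def by (rule Bochner_Integration.integral_cong) (simp_all add: algebra_simps)
  also have "\<dots> = a * laplacian m f x + b * laplacian m g x"
    using elim by (simp add: laplacian_def)
  finally show ?case .
qed

lemma laplacian_diff_const: "laplacian m (\<lambda>x. f x - c) = laplacian m f"
  by (simp add: laplacian_def[abs_def])

lemma square_add_le: "((a::real) + b)\<^sup>2 \<le> 2 * a\<^sup>2 + 2 * b\<^sup>2"
  using zero_le_power2[of "a - b"] by (simp add: power2_diff power2_sum)

lemma H_m_nonneg: "0 \<le> H_m m \<nu> f"
  by (simp add: H_m_def)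

lemma H_m_diff_const: "H_m m \<nu> (\<lambda>x. f x - c) = H_m m \<nu> f"
  by (simp add: H_m_def)

lemma L2_joint_increment: "f \<in> L2 \<nu> \<Longrightarrow> (\<lambda>z. f (snd z) - f (fst z)) \<in> L2 joint"
  by (intro L2_diff L2_joint_snd L2_joint_fst)

lemma H_m_joint:
  assumes "f \<in> L2 \<nu>"
  shows "H_m m \<nu> f = 1/2 * (\<integral>z. (f (snd z) - f (fst z))\<^sup>2 \<partial>joint)"
  using integral_joint[OF L2_integrable_square[OF L2_joint_increment[OF assms]]]
  by (simp add: H_m_def)

lemma H_m_eq_L2_inner:
  assumes "f \<in> L2 \<nu>"
  shows "H_m m \<nu> f = L2_inner \<nu> f f - L2_inner \<nu> f (P f)"
proof -
  have [measurable]: "f \<in> borel_measurable borel"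
    using assms by (rule L2_\<nu>_borel_measurable)
  note sq = L2_integrable_square[OF L2_joint_snd[OF assms]] L2_integrable_square[OF L2_joint_fst[OF assms]]
    and prod = L2_integrable_mult[OF L2_joint_fst[OF assms] L2_joint_snd[OF assms]]
  have "(\<integral>z. (f (snd z) - f (fst z))\<^sup>2 \<partial>joint) =
      (\<integral>z. (f (snd z))\<^sup>2 - 2 * (f (fst z) * f (snd z)) + (f (fst z))\<^sup>2 \<partial>joint)"
    by (intro Bochner_Integration.integral_cong) (simp_all add: power2_eq_square algebra_simps)
  also have "\<dots> = (\<integral>z. (f (snd z))\<^sup>2 \<partial>joint) - 2 * (\<integral>z. f (fst z) * f (snd z) \<partial>joint) + (\<integral>z. (f (fst z))\<^sup>2 \<partial>joint)"
    using sq prod by simp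
  also have "\<dots> = 2 * L2_inner \<nu> f f - 2 * L2_inner \<nu> f (P f)"
    using integral_joint_fst[of "\<lambda>x. (f x)\<^sup>2"] integral_joint_snd[of "\<lambda>x. (f x)\<^sup>2"]
    by (simp add: L2_inner_P_eq_joint[OF assms assms] L2_inner_self)
  finally show ?thesis
    by (simp add: H_m_joint[OF assms])
qed

lemma H_m_eq_L2_inner_laplacian:
  assumes "f \<in> L2 \<nu>"
  shows "H_m m \<nu> f = - L2_inner \<nu> (laplacian m f) f"
  using H_m_eq_L2_inner[OF assms] L2_inner_laplacian_left[OF assms assms] L2_inner_commute[of \<nu> "P f" f]
  by simp

lemma L2_inner_laplacian_le_H_m:
  assumes "f \<in> L2 \<nu>"
  shows "L2_inner \<nu> (laplacian m f) (laplacian m f) \<le> 2 * H_m m \<nu> f"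
proof -
  have Pf: "P f \<in> L2 \<nu>"
    by (rule P_L2[OF assms])
  have "L2_inner \<nu> (laplacian m f) (laplacian m f) = L2_inner \<nu> (\<lambda>x. 1 * P f x + (-1) * f x) (\<lambda>x. 1 * P f x + (-1) * f x)"
    using assms laplacian_L2_AE_eq[OF assms] laplacian_L2[OF assms] Pf
    by (intro L2_inner_cong_AE) (auto intro: L2_\<nu>_borel_measurable L2_diff)
  also have "\<dots> = L2_inner \<nu> (P f) (P f) - 2 * L2_inner \<nu> f (P f) + L2_inner \<nu> f f"
    using L2_inner_linear_combination[of "P f" \<nu> f "P f" f 1 "-1" 1 "-1"] assms Pf
    using L2_inner_commute[of \<nu> "P f" f] by simp
  also have "\<dots> \<le> 2 * H_m m \<nu> f"
    using L2_inner_P_le[OF assms] H_m_eq_L2_inner[OF assms] by simp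
  finally show ?thesis .
qed

lemma H_m_le_L2_inner:
  assumes "f \<in> L2 \<nu>"
  shows "H_m m \<nu> f \<le> 2 * L2_inner \<nu> f f"
proof -
  have [measurable]: "f \<in> borel_measurable borel"
    using assms by (rule L2_\<nu>_borel_measurable)
  have "(\<integral>z. (f (snd z) - f (fst z))\<^sup>2 \<partial>joint) \<le> (\<integral>z. 2 * (f (snd z))\<^sup>2 + 2 * (f (fst z))\<^sup>2 \<partial>joint)"
  proof (rule integral_mono)
    show "integrable joint (\<lambda>z. 2 * (f (snd z))\<^sup>2 + 2 * (f (fst z))\<^sup>2)"
      using L2_integrable_square[OF L2_joint_snd[OF assms]] L2_integrable_square[OF L2_joint_fst[OF assms]]
      by simp
    show "(f (snd z) - f (fst z))\<^sup>2 \<le> 2 * (f (snd z))\<^sup>2 + 2 * (f (fst z))\<^sup>2" for z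
      using square_add_le[of "f (snd z)" "- f (fst z)"] by simp
  qed (rule L2_integrable_square[OF L2_joint_increment[OF assms]])
  also have "\<dots> = 4 * L2_inner \<nu> f f"
    using L2_integrable_square[OF L2_joint_snd[OF assms]] L2_integrable_square[OF L2_joint_fst[OF assms]]
      integral_joint_fst[of "\<lambda>x. (f x)\<^sup>2"] integral_joint_snd[of "\<lambda>x. (f x)\<^sup>2"]
    by (simp add: L2_inner_self)
  finally show ?thesis
    by (simp add: H_m_joint[OF assms])
qed

lemma H_m_le_H_m_diff:
  assumes "u \<in> L2 \<nu>" "f \<in> L2 \<nu>"
  shows "H_m m \<nu> u \<le> 2 * H_m m \<nu> f + 2 * H_m m \<nu> (\<lambda>x. u x - f x)"
proof -
  have uf: "(\<lambda>x. u x - f x) \<in> L2 \<nu>"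
    by (rule L2_diff[OF assms])
  note int = L2_integrable_square[OF L2_joint_increment]
  have "(\<integral>z. (u (snd z) - u (fst z))\<^sup>2 \<partial>joint) \<le>
      (\<integral>z. 2 * (f (snd z) - f (fst z))\<^sup>2 + 2 * ((u (snd z) - f (snd z)) - (u (fst z) - f (fst z)))\<^sup>2 \<partial>joint)"
  proof (rule integral_mono[OF int[OF assms(1)]])
    show "integrable joint (\<lambda>z. 2 * (f (snd z) - f (fst z))\<^sup>2 + 2 * ((u (snd z) - f (snd z)) - (u (fst z) - f (fst z)))\<^sup>2)"
      using int[OF assms(2)] int[OF uf] by simp
    show "(u (snd z) - u (fst z))\<^sup>2 \<le> 2 * (f (snd z) - f (fst z))\<^sup>2 + 2 * ((u (snd z) - f (snd z)) - (u (fst z) - f (fst z)))\<^sup>2" for z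
      using square_add_le[of "f (snd z) - f (fst z)" "(u (snd z) - f (snd z)) - (u (fst z) - f (fst z))"]
      by simp
  qed
  also have "\<dots> = 2 * (\<integral>z. (f (snd z) - f (fst z))\<^sup>2 \<partial>joint) + 2 * (\<integral>z. ((u (snd z) - f (snd z)) - (u (fst z) - f (fst z)))\<^sup>2 \<partial>joint)"
    using int[OF assms(2)] int[OF uf] by simp
  finally show ?thesis
    using H_m_joint[OF assms(1)] H_m_joint[OF assms(2)] H_m_joint[OF uf] by simp
qed

lemma laplacian_AE_zero_of_H_m_zero:
  assumes "f \<in> L2 \<nu>" "H_m m \<nu> f = 0"
  shows "AE x in \<nu>. laplacian m f x = 0"
proof -
  have [measurable]: "f \<in> borel_measurable borel"
    using assms(1) by (rule L2_\<nu>_borel_measurable)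
  have int: "integrable joint (\<lambda>z. (f (snd z) - f (fst z))\<^sup>2)"
    by (rule L2_integrable_square[OF L2_joint_increment[OF assms(1)]])
  have "(\<integral>x. (\<integral>y. (f y - f x)\<^sup>2 \<partial>m x) \<partial>\<nu>) = 0"
    using assms(2) by (simp add: H_m_def)
  then have "AE x in \<nu>. (\<integral>y. (f y - f x)\<^sup>2 \<partial>m x) = 0"
    using integrable_integral_kernel[OF int] by (subst (asm) integral_nonneg_eq_0_iff_AE) auto
  with AE_integrable_of_integrable_joint[OF int]
  show ?thesis
  proof eventually_elim
    case (elim x)
    then have "AE y in m x. f y - f x = 0"
      using integral_nonneg_eq_0_iff_AE[of "m x" "\<lambda>y. (f y - f x)\<^sup>2"] by simp
    then show ?case
      unfolding laplacian_def by (rule integral_eq_zero_AE)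
  qed
qed

section \<open>Integrated Bakry-Emery conditions and the Poincare inequality\<close>

lemma L2_inner_comb_laplacian:
  assumes "h \<in> L2 \<nu>"
  shows "L2_inner \<nu> (\<lambda>x. a * h x + b * laplacian m h x) (\<lambda>x. a * h x + b * laplacian m h x) =
    a\<^sup>2 * L2_inner \<nu> h h - 2 * a * b * H_m m \<nu> h + b\<^sup>2 * L2_inner \<nu> (laplacian m h) (laplacian m h)"
  using L2_inner_linear_combination[OF assms laplacian_L2[OF assms] assms laplacian_L2[OF assms], of a b a b]
    H_m_eq_L2_inner_laplacian[OF assms] L2_inner_commute[of \<nu> h "laplacian m h"]
  by (simp add: power2_eq_square)

lemma H_m_comb_laplacian:
  assumes h: "h \<in> L2 \<nu>"
  shows "H_m m \<nu> (\<lambda>x. a * h x + b * laplacian m h x) =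
    a\<^sup>2 * H_m m \<nu> h - 2 * a * b * L2_inner \<nu> (laplacian m h) (laplacian m h) + b\<^sup>2 * H_m m \<nu> (laplacian m h)"
proof -
  define h1 h2 where "h1 = laplacian m h" and "h2 = laplacian m h1"
  have L2: "h1 \<in> L2 \<nu>" "h2 \<in> L2 \<nu>" and k: "(\<lambda>x. a * h x + b * h1 x) \<in> L2 \<nu>"
    using h by (simp_all add: h1_def h2_def laplacian_L2 L2_add L2_mult_const)
  have "L2_inner \<nu> (laplacian m (\<lambda>x. a * h x + b * h1 x)) (\<lambda>x. a * h x + b * h1 x) =
      L2_inner \<nu> (\<lambda>x. a * h1 x + b * h2 x) (\<lambda>x. a * h x + b * h1 x)"
    using laplacian_linear[OF h L2(1), of a b] laplacian_L2[OF k] L2 k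
    by (intro L2_inner_cong_AE L2_borel_measurable L2_add L2_mult_const) (simp_all add: h h1_def h2_def)
  also have "\<dots> = a\<^sup>2 * L2_inner \<nu> h1 h + 2 * a * b * L2_inner \<nu> h1 h1 + b\<^sup>2 * L2_inner \<nu> h2 h1"
    using L2_inner_linear_combination[OF L2 h L2(1), of a b a b] laplacian_self_adjoint[OF L2(1) h]
    by (simp add: h1_def h2_def power2_eq_square algebra_simps)
  finally show ?thesis
    using H_m_eq_L2_inner_laplacian[OF h] H_m_eq_L2_inner_laplacian[OF L2(1)] H_m_eq_L2_inner_laplacian[OF k]
    by (simp add: h1_def h2_def)
qed

lemma L2_inner_laplacian_comb_laplacian:
  assumes h: "h \<in> L2 \<nu>"
  shows "L2_inner \<nu> (laplacian m (\<lambda>x. a * h x + b * laplacian m h x)) (laplacian m (\<lambda>x. a * h x + b * laplacian m h x)) =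
    a\<^sup>2 * L2_inner \<nu> (laplacian m h) (laplacian m h) - 2 * a * b * H_m m \<nu> (laplacian m h)
      + b\<^sup>2 * L2_inner \<nu> (laplacian m (laplacian m h)) (laplacian m (laplacian m h))"
proof -
  define h1 h2 where "h1 = laplacian m h" and "h2 = laplacian m h1"
  have L2: "h1 \<in> L2 \<nu>" "h2 \<in> L2 \<nu>" and k: "(\<lambda>x. a * h x + b * h1 x) \<in> L2 \<nu>"
    using h by (simp_all add: h1_def h2_def laplacian_L2 L2_add L2_mult_const)
  have "AE x in \<nu>. laplacian m (\<lambda>x. a * h x + b * h1 x) x = a * h1 x + b * h2 x"
    using laplacian_linear[OF h L2(1), of a b] by (simp add: h1_def h2_def)
  then have "L2_inner \<nu> (laplacian m (\<lambda>x. a * h x + b * h1 x)) (laplacian m (\<lambda>x. a * h x + b * h1 x)) =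
      L2_inner \<nu> (\<lambda>x. a * h1 x + b * laplacian m h1 x) (\<lambda>x. a * h1 x + b * laplacian m h1 x)"
    using laplacian_L2[OF k] L2 by (intro L2_inner_cong_AE L2_borel_measurable L2_add L2_mult_const) (simp_all add: h2_def laplacian_L2)
  then show ?thesis
    using L2_inner_comb_laplacian[OF L2(1)] by (simp add: h1_def)
qed

lemma IBE_inf_iff: "IBE_inf m \<nu> \<kappa> \<longleftrightarrow> (\<forall>f\<in>L2 \<nu>. \<kappa> * H_m m \<nu> f \<le> L2_inner \<nu> (laplacian m f) (laplacian m f))"
  by (simp add: IBE_inf_def L2_inner_self)

definition lazy :: "('a \<Rightarrow> real) \<Rightarrow> 'a \<Rightarrow> real" where
  "lazy h x = h x + 1/2 * laplacian m h x"

lemma lazy_L2: "h \<in> L2 \<nu> \<Longrightarrow> lazy h \<in> L2 \<nu>"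
  unfolding lazy_def by (intro L2_add L2_mult_const laplacian_L2)

lemma integral_lazy: "h \<in> L2 \<nu> \<Longrightarrow> (\<integral>x. lazy h x \<partial>\<nu>) = (\<integral>x. h x \<partial>\<nu>)"
  using finite_measure.L2_integrable[OF finite_measure_\<nu>, of h]
    integrable_laplacian[of h] integral_laplacian[of h]
  by (simp add: lazy_def)

text \<open>
  With \<open>s \<in> [0, 2]\<close> the spectral variable of \<open>-\<Delta>\<^sub>m\<close>, these say that \<open>s (s - \<kappa>)\<close>,
  \<open>s (s - \<kappa>) (2 - s)\<^sup>2\<close> and \<open>s (2 - s) (s - \<kappa>)\<^sup>2\<close> have nonnegative integrals against the spectral
  measure of \<open>h\<close>: the first two are \<open>IBE\<close> for \<open>h\<close> and \<open>(2 - s) h\<close>, the last one is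
  \<open>\<parallel>\<Delta>\<^sub>m k\<parallel>\<^sup>2 \<le> 2 \<H>\<^sub>m(k)\<close> for \<open>k = (\<kappa> - s) h\<close>.
\<close>

lemma IBE_inf_moment_inequalities:
  assumes IBE: "IBE_inf m \<nu> \<kappa>" and h: "h \<in> L2 \<nu>"
  defines "\<mu>1 \<equiv> H_m m \<nu> h" and "\<mu>2 \<equiv> L2_inner \<nu> (laplacian m h) (laplacian m h)"
    and "\<mu>3 \<equiv> H_m m \<nu> (laplacian m h)"
    and "\<mu>4 \<equiv> L2_inner \<nu> (laplacian m (laplacian m h)) (laplacian m (laplacian m h))"
  shows "\<kappa> * \<mu>1 \<le> \<mu>2"
    and "\<kappa> * (4 * \<mu>1 - 4 * \<mu>2 + \<mu>3) \<le> 4 * \<mu>2 - 4 * \<mu>3 + \<mu>4"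
    and "\<kappa>\<^sup>2 * \<mu>2 - 2 * \<kappa> * \<mu>3 + \<mu>4 \<le> 2 * (\<kappa>\<^sup>2 * \<mu>1 - 2 * \<kappa> * \<mu>2 + \<mu>3)"
proof -
  have IBE_at: "\<kappa> * H_m m \<nu> f \<le> L2_inner \<nu> (laplacian m f) (laplacian m f)" if "f \<in> L2 \<nu>" for f
    using IBE that by (simp add: IBE_inf_iff)
  have comb_L2: "(\<lambda>x. a * h x + b * laplacian m h x) \<in> L2 \<nu>" for a b
    using h by (intro L2_add L2_mult_const laplacian_L2)
  show "\<kappa> * \<mu>1 \<le> \<mu>2"
    using IBE_at[OF h] by (simp add: \<mu>1_def \<mu>2_def)
  show "\<kappa> * (4 * \<mu>1 - 4 * \<mu>2 + \<mu>3) \<le> 4 * \<mu>2 - 4 * \<mu>3 + \<mu>4"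
    using IBE_at[OF comb_L2[of 2 1]] H_m_comb_laplacian[OF h, of 2 1] L2_inner_laplacian_comb_laplacian[OF h, of 2 1]
    by (simp add: \<mu>1_def \<mu>2_def \<mu>3_def \<mu>4_def)
  show "\<kappa>\<^sup>2 * \<mu>2 - 2 * \<kappa> * \<mu>3 + \<mu>4 \<le> 2 * (\<kappa>\<^sup>2 * \<mu>1 - 2 * \<kappa> * \<mu>2 + \<mu>3)"
    using L2_inner_laplacian_le_H_m[OF comb_L2[of \<kappa> 1]] H_m_comb_laplacian[OF h, of \<kappa> 1]
      L2_inner_laplacian_comb_laplacian[OF h, of \<kappa> 1]
    by (simp add: \<mu>1_def \<mu>2_def \<mu>3_def \<mu>4_def)
qed

text \<open>
  Multiplied by \<open>4 (2 - \<kappa>)\<close>, the two claims are the integrals of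
  \<open>(2 - \<kappa>) s (s - \<kappa>) (4 - s) = 2 (2 - \<kappa>) s (s - \<kappa>) + s (s - \<kappa>) (2 - s)\<^sup>2 + s (2 - s) (s - \<kappa>)\<^sup>2\<close> and
  \<open>(2 - \<kappa>) s (s - \<kappa>) (4 - \<kappa> - s) = (2 - \<kappa>)\<^sup>2 s (s - \<kappa>) + s (s - \<kappa>) (2 - s)\<^sup>2 + s (2 - s) (s - \<kappa>)\<^sup>2\<close>.
\<close>

lemma IBE_inf_lazy_step:
  assumes IBE: "IBE_inf m \<nu> \<kappa>" and \<kappa>: "\<kappa> < 2" and h: "h \<in> L2 \<nu>"
  shows "H_m m \<nu> (lazy h) - \<kappa> * L2_inner \<nu> (lazy h) (lazy h) \<le> H_m m \<nu> h - \<kappa> * L2_inner \<nu> h h"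
    and "H_m m \<nu> (lazy h) \<le> (1 - \<kappa>/2)\<^sup>2 * H_m m \<nu> h"
proof -
  define \<mu>0 \<mu>1 \<mu>2 \<mu>3 \<mu>4 where "\<mu>0 = L2_inner \<nu> h h" and "\<mu>1 = H_m m \<nu> h"
    and "\<mu>2 = L2_inner \<nu> (laplacian m h) (laplacian m h)" and "\<mu>3 = H_m m \<nu> (laplacian m h)"
    and "\<mu>4 = L2_inner \<nu> (laplacian m (laplacian m h)) (laplacian m (laplacian m h))"
  note ibe = IBE_inf_moment_inequalities[OF IBE h, folded \<mu>1_def \<mu>2_def \<mu>3_def \<mu>4_def]
  have lazy_eq: "lazy h = (\<lambda>x. 1 * h x + 1/2 * laplacian m h x)"
    by (simp add: lazy_def[abs_def])
  have H_lazy: "H_m m \<nu> (lazy h) = \<mu>1 - \<mu>2 + 1/4 * \<mu>3"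
    using H_m_comb_laplacian[OF h, of 1 "1/2"] by (simp add: lazy_eq \<mu>1_def \<mu>2_def \<mu>3_def power2_eq_square)
  have L2_lazy: "L2_inner \<nu> (lazy h) (lazy h) = \<mu>0 - \<mu>1 + 1/4 * \<mu>2"
    using L2_inner_comb_laplacian[OF h, of 1 "1/2"] by (simp add: lazy_eq \<mu>0_def \<mu>1_def \<mu>2_def power2_eq_square)
  have \<mu>1: "\<mu>1 = H_m m \<nu> h" and \<mu>0: "\<mu>0 = L2_inner \<nu> h h"
    by (simp_all add: \<mu>0_def \<mu>1_def)
  define s1 s2 s3 where "s1 = \<mu>2 - \<kappa> * \<mu>1"
    and "s2 = 4 * \<mu>2 - 4 * \<mu>3 + \<mu>4 - \<kappa> * (4 * \<mu>1 - 4 * \<mu>2 + \<mu>3)"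
    and "s3 = 2 * (\<kappa>\<^sup>2 * \<mu>1 - 2 * \<kappa> * \<mu>2 + \<mu>3) - (\<kappa>\<^sup>2 * \<mu>2 - 2 * \<kappa> * \<mu>3 + \<mu>4)"
  have s: "0 \<le> s1" "0 \<le> s2" "0 \<le> s3"
    using ibe by (simp_all add: s1_def s2_def s3_def)
  have "4 * (2 - \<kappa>) * ((\<mu>1 - \<kappa> * \<mu>0) - ((\<mu>1 - \<mu>2 + 1/4 * \<mu>3) - \<kappa> * (\<mu>0 - \<mu>1 + 1/4 * \<mu>2)))
      = 2 * (2 - \<kappa>) * s1 + s2 + s3"
    by (simp add: s1_def s2_def s3_def power2_eq_square algebra_simps)
  then have "0 \<le> 4 * (2 - \<kappa>) * ((\<mu>1 - \<kappa> * \<mu>0) - ((\<mu>1 - \<mu>2 + 1/4 * \<mu>3) - \<kappa> * (\<mu>0 - \<mu>1 + 1/4 * \<mu>2)))"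
    using s \<kappa> by simp
  then show "H_m m \<nu> (lazy h) - \<kappa> * L2_inner \<nu> (lazy h) (lazy h) \<le> H_m m \<nu> h - \<kappa> * L2_inner \<nu> h h"
    using \<kappa> by (simp add: H_lazy L2_lazy \<mu>0 \<mu>1 zero_le_mult_iff)
  have "4 * (2 - \<kappa>) * ((1 - \<kappa>/2)\<^sup>2 * \<mu>1 - (\<mu>1 - \<mu>2 + 1/4 * \<mu>3)) = (2 - \<kappa>)\<^sup>2 * s1 + s2 + s3"
    by (simp add: s1_def s2_def s3_def power2_eq_square algebra_simps)
  then have "0 \<le> 4 * (2 - \<kappa>) * ((1 - \<kappa>/2)\<^sup>2 * \<mu>1 - (\<mu>1 - \<mu>2 + 1/4 * \<mu>3))"
    using s by simp
  then show "H_m m \<nu> (lazy h) \<le> (1 - \<kappa>/2)\<^sup>2 * H_m m \<nu> h"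
    using \<kappa> by (simp add: H_lazy \<mu>1 zero_le_mult_iff)
qed

lemma lazy_power_L2: "h \<in> L2 \<nu> \<Longrightarrow> (lazy ^^ k) h \<in> L2 \<nu>"
  by (induction k) (simp_all add: lazy_L2)

lemma integral_lazy_power: "h \<in> L2 \<nu> \<Longrightarrow> (\<integral>x. (lazy ^^ k) h x \<partial>\<nu>) = (\<integral>x. h x \<partial>\<nu>)"
  by (induction k) (simp_all add: integral_lazy lazy_power_L2)

lemma IBE_inf_lazy_power:
  assumes IBE: "IBE_inf m \<nu> \<kappa>" and \<kappa>: "\<kappa> < 2" and h: "h \<in> L2 \<nu>"
  shows "H_m m \<nu> ((lazy ^^ k) h) - \<kappa> * L2_inner \<nu> ((lazy ^^ k) h) ((lazy ^^ k) h) \<le> H_m m \<nu> h - \<kappa> * L2_inner \<nu> h h"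
    and "H_m m \<nu> ((lazy ^^ k) h) \<le> ((1 - \<kappa>/2)\<^sup>2) ^ k * H_m m \<nu> h"
proof (induction k)
  case (Suc k)
  note step = IBE_inf_lazy_step[OF IBE \<kappa> lazy_power_L2[OF h, of k]]
  case 1
  show ?case
    using step(1) Suc.IH(1) by simp
  case 2
  have "H_m m \<nu> ((lazy ^^ Suc k) h) \<le> (1 - \<kappa>/2)\<^sup>2 * H_m m \<nu> ((lazy ^^ k) h)"
    using step(2) by simp
  also have "\<dots> \<le> (1 - \<kappa>/2)\<^sup>2 * (((1 - \<kappa>/2)\<^sup>2) ^ k * H_m m \<nu> h)"
    by (rule mult_left_mono[OF Suc.IH(2)]) simp
  finally show ?case
    by (simp add: mult.assoc)
qed simp_all

lemma L2_lazy_increment_le: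
  assumes "h \<in> L2 \<nu>"
  shows "(\<integral>x. (lazy h x - h x)\<^sup>2 \<partial>\<nu>) \<le> 1/2 * H_m m \<nu> h"
  using L2_inner_laplacian_le_H_m[OF assms]
  by (simp add: lazy_def L2_inner_self power_mult_distrib power2_eq_square)

lemma H_m_eq_0_of_L2_limit:
  assumes "u \<in> L2 \<nu>" "\<And>k. s k \<in> L2 \<nu>"
    and lim: "(\<lambda>k. \<integral>x. (s k x - u x)\<^sup>2 \<partial>\<nu>) \<longlonglongrightarrow> 0" and H_lim: "(\<lambda>k. H_m m \<nu> (s k)) \<longlonglongrightarrow> 0"
  shows "H_m m \<nu> u = 0"
proof -
  have "H_m m \<nu> u \<le> 2 * H_m m \<nu> (s k) + 4 * (\<integral>x. (s k x - u x)\<^sup>2 \<partial>\<nu>)" for k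
  proof -
    have "H_m m \<nu> (\<lambda>x. u x - s k x) \<le> 2 * (\<integral>x. (s k x - u x)\<^sup>2 \<partial>\<nu>)"
      using H_m_le_L2_inner[OF L2_diff[OF assms(1,2)]] by (simp add: L2_inner_self power2_commute)
    then show ?thesis
      using H_m_le_H_m_diff[OF assms(1) assms(2)[of k]] by simp
  qed
  moreover have "(\<lambda>k. 2 * H_m m \<nu> (s k) + 4 * (\<integral>x. (s k x - u x)\<^sup>2 \<partial>\<nu>)) \<longlonglongrightarrow> 0"
    using tendsto_add[OF tendsto_mult_right_zero[OF H_lim] tendsto_mult_right_zero[OF lim]] by simp
  ultimately have "H_m m \<nu> u \<le> 0"
    by (intro LIMSEQ_le_const) auto
  then show ?thesis
    using H_m_nonneg[of u] by simp
qed

lemma AE_zero_of_H_m_zero: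
  assumes "ergodic m \<nu>" "u \<in> L2 \<nu>" "H_m m \<nu> u = 0" "(\<integral>x. u x \<partial>\<nu>) = 0"
  shows "AE x in \<nu>. u x = 0"
proof -
  obtain c where c: "AE x in \<nu>. u x = c"
    using assms(1,2) laplacian_AE_zero_of_H_m_zero[OF assms(2,3)] by (auto simp: ergodic_def)
  have "(\<integral>x. u x \<partial>\<nu>) = (\<integral>x. c \<partial>\<nu>)"
    using assms(2) c by (intro integral_cong_AE) (simp_all add: L2_\<nu>_borel_measurable)
  then have "c = 0"
    using assms(4) by simp
  with c show ?thesis
    by simp
qed

lemma lazy_power_tendsto_0:
  assumes erg: "ergodic m \<nu>" and IBE: "IBE_inf m \<nu> \<kappa>" and \<kappa>: "0 < \<kappa>" "\<kappa> < 2"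
    and g: "g \<in> L2 \<nu>" "(\<integral>x. g x \<partial>\<nu>) = 0"
  shows "(\<lambda>k. L2_inner \<nu> ((lazy ^^ k) g) ((lazy ^^ k) g)) \<longlonglongrightarrow> 0"
proof -
  define s where "s k = (lazy ^^ k) g" for k
  define \<rho> where "\<rho> = (1 - \<kappa>/2)\<^sup>2"
  have s: "s k \<in> L2 \<nu>" for k
    unfolding s_def by (rule lazy_power_L2[OF g(1)])
  have "0 < 1 - \<kappa>/2" "1 - \<kappa>/2 < 1"
    using \<kappa> by simp_all
  then have \<rho>: "0 < \<rho>" "\<rho> < 1"
    unfolding \<rho>_def using power_strict_mono[of "1 - \<kappa>/2" 1 2] by simp_all
  have H_s: "H_m m \<nu> (s k) \<le> \<rho> ^ k * H_m m \<nu> g" for k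
    using IBE_inf_lazy_power(2)[OF IBE \<kappa>(2) g(1)] by (simp add: s_def \<rho>_def)
  have increments: "(\<integral>x. (s (Suc k) x - s k x)\<^sup>2 \<partial>\<nu>) \<le> (1/2 * H_m m \<nu> g) * \<rho> ^ k" for k
    using L2_lazy_increment_le[OF s[of k]] H_s[of k] by (simp add: s_def mult.commute)
  obtain u where u: "u \<in> L2 \<nu>" and lim: "(\<lambda>k. \<integral>x. (s k x - u x)\<^sup>2 \<partial>\<nu>) \<longlonglongrightarrow> 0"
    using L2_limit_of_geometric_increments[of s \<nu> \<rho> "1/2 * H_m m \<nu> g", OF s \<rho> increments] by blast
  have "(\<lambda>k. H_m m \<nu> (s k)) \<longlonglongrightarrow> 0"
  proof (rule tendsto_sandwich[OF _ _ tendsto_const])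
    show "(\<lambda>k. \<rho> ^ k * H_m m \<nu> g) \<longlonglongrightarrow> 0"
      using \<rho> by (intro tendsto_mult_left_zero LIMSEQ_power_zero) simp
    show "\<forall>\<^sub>F k in sequentially. 0 \<le> H_m m \<nu> (s k)"
      by (simp add: H_m_nonneg)
    show "\<forall>\<^sub>F k in sequentially. H_m m \<nu> (s k) \<le> \<rho> ^ k * H_m m \<nu> g"
      by (simp add: H_s)
  qed
  then have H_u: "H_m m \<nu> u = 0"
    by (rule H_m_eq_0_of_L2_limit[OF u s lim])
  have "(\<lambda>k. \<integral>x. s k x \<partial>\<nu>) \<longlonglongrightarrow> (\<integral>x. u x \<partial>\<nu>)"
    using prob_space.integral_tendsto_of_L2_tendsto[of \<nu> s u] prob_space_\<nu> s u lim by blast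
  then have "(\<integral>x. u x \<partial>\<nu>) = 0"
    by (simp add: s_def integral_lazy_power g LIMSEQ_const_iff)
  with H_u have "AE x in \<nu>. u x = 0"
    by (intro AE_zero_of_H_m_zero[OF erg u])
  then have "AE x in \<nu>. (s k x)\<^sup>2 = (s k x - u x)\<^sup>2" for k
    by eventually_elim simp
  moreover have [measurable]: "s k \<in> borel_measurable borel" "u \<in> borel_measurable borel" for k
    using s u by (simp_all add: L2_\<nu>_borel_measurable)
  ultimately have "L2_inner \<nu> (s k) (s k) = (\<integral>x. (s k x - u x)\<^sup>2 \<partial>\<nu>)" for k
    unfolding L2_inner_self by (intro integral_cong_AE) measurable
  with lim show ?thesis
    by (simp add: s_def)
qed

lemma Var_eq_L2_inner: "Var \<nu> f = L2_inner \<nu> (\<lambda>x. f x - (\<integral>z. f z \<partial>\<nu>)) (\<lambda>x. f x - (\<integral>z. f z \<partial>\<nu>))"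
  by (simp add: Var_def L2_inner_self)

lemma IBE_inf_imp_poincare_less_2:
  assumes erg: "ergodic m \<nu>" and IBE: "IBE_inf m \<nu> \<kappa>" and \<kappa>: "0 < \<kappa>" "\<kappa> < 2"
  shows "poincare m \<nu> \<kappa>"
  unfolding poincare_def
proof
  fix f assume f: "f \<in> L2 \<nu>"
  interpret prob_space \<nu>
    by (rule prob_space_\<nu>)
  define g where "g = (\<lambda>x. f x - (\<integral>z. f z \<partial>\<nu>))"
  have g: "g \<in> L2 \<nu>"
    unfolding g_def by (intro L2_diff f L2_const)
  have "(\<integral>x. g x \<partial>\<nu>) = 0"
    using L2_integrable[OF f] by (simp add: g_def prob_space)
  then have "(\<lambda>k. - \<kappa> * L2_inner \<nu> ((lazy ^^ k) g) ((lazy ^^ k) g)) \<longlonglongrightarrow> - \<kappa> * 0"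
    by (intro tendsto_mult_left lazy_power_tendsto_0[OF erg IBE \<kappa> g])
  moreover have "- \<kappa> * L2_inner \<nu> ((lazy ^^ k) g) ((lazy ^^ k) g) \<le> H_m m \<nu> g - \<kappa> * L2_inner \<nu> g g" for k
    using IBE_inf_lazy_power(1)[OF IBE \<kappa>(2) g, of k] H_m_nonneg[of "(lazy ^^ k) g"] by simp
  ultimately have "- \<kappa> * 0 \<le> H_m m \<nu> g - \<kappa> * L2_inner \<nu> g g"
    by (intro LIMSEQ_le_const2) auto
  moreover have "Var \<nu> f = L2_inner \<nu> g g" "H_m m \<nu> f = H_m m \<nu> g"
    by (simp_all add: Var_eq_L2_inner g_def H_m_diff_const)
  ultimately show "\<kappa> * Var \<nu> f \<le> H_m m \<nu> f"
    by simp
qed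

lemma IBE_inf_mono:
  assumes "IBE_inf m \<nu> \<kappa>" "l \<le> \<kappa>"
  shows "IBE_inf m \<nu> l"
  unfolding IBE_inf_def
proof
  fix f assume "f \<in> L2 \<nu>"
  have "l * H_m m \<nu> f \<le> \<kappa> * H_m m \<nu> f"
    using assms(2) H_m_nonneg by (rule mult_right_mono)
  also have "\<dots> \<le> (\<integral>x. (laplacian m f x)\<^sup>2 \<partial>\<nu>)"
    using assms(1) \<open>f \<in> L2 \<nu>\<close> by (simp add: IBE_inf_def)
  finally show "l * H_m m \<nu> f \<le> (\<integral>x. (laplacian m f x)\<^sup>2 \<partial>\<nu>)" .
qed

lemma poincare_of_less:
  assumes "0 < \<kappa>" and less: "\<And>l. 0 < l \<Longrightarrow> l < \<kappa> \<Longrightarrow> poincare m \<nu> l"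
  shows "poincare m \<nu> \<kappa>"
  unfolding poincare_def
proof
  fix f assume f: "f \<in> L2 \<nu>"
  show "\<kappa> * Var \<nu> f \<le> H_m m \<nu> f"
  proof (cases "Var \<nu> f = 0")
    case False
    then have "0 < Var \<nu> f"
      using Var_nonneg[of \<nu> f] by simp
    moreover have "\<kappa> \<le> H_m m \<nu> f / Var \<nu> f"
    proof (rule dense_le_bounded[OF assms(1)])
      show "l \<le> H_m m \<nu> f / Var \<nu> f" if "0 < l" "l < \<kappa>" for l
        using less[OF that] f \<open>0 < Var \<nu> f\<close> by (simp add: poincare_def le_divide_eq)
    qed
    ultimately show ?thesis
      by (simp add: le_divide_eq)
  qed (simp add: H_m_nonneg)
qed

lemma IBE_inf_imp_poincare:
  assumes erg: "ergodic m \<nu>" and "0 < \<kappa>" and IBE: "IBE_inf m \<nu> \<kappa>"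
  shows "poincare m \<nu> \<kappa>"
proof -
  have poincare_min: "poincare m \<nu> (min \<kappa> 2)"
  proof (rule poincare_of_less)
    show "poincare m \<nu> l" if "0 < l" "l < min \<kappa> 2" for l
      using that by (intro IBE_inf_imp_poincare_less_2[OF erg IBE_inf_mono[OF IBE]]) simp_all
  qed (use \<open>0 < \<kappa>\<close> in simp)
  show ?thesis
  proof (cases "\<kappa> \<le> 2")
    case False
    show ?thesis
      unfolding poincare_def
    proof
      fix f assume f: "f \<in> L2 \<nu>"
      have "\<kappa> * H_m m \<nu> f \<le> L2_inner \<nu> (laplacian m f) (laplacian m f)"
        using IBE f by (simp add: IBE_inf_iff)
      also have "\<dots> \<le> 2 * H_m m \<nu> f"
        by (rule L2_inner_laplacian_le_H_m[OF f])
      finally have "\<kappa> * H_m m \<nu> f \<le> 2 * H_m m \<nu> f" .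
      then have "(\<kappa> - 2) * H_m m \<nu> f \<le> 0"
        by (simp add: left_diff_distrib)
      then have "H_m m \<nu> f = 0"
        using False H_m_nonneg[of f] by (simp add: mult_le_0_iff)
      moreover have "2 * Var \<nu> f \<le> H_m m \<nu> f"
        using poincare_min f False by (simp add: poincare_def)
      ultimately show "\<kappa> * Var \<nu> f \<le> H_m m \<nu> f"
        using Var_nonneg[of \<nu> f] by simp
    qed
  qed (use poincare_min in simp)
qed

lemma poincare_imp_IBE_inf:
  assumes "0 \<le> \<kappa>" and poincare: "poincare m \<nu> \<kappa>"
  shows "IBE_inf m \<nu> \<kappa>"
  unfolding IBE_inf_iff
proof
  fix f assume f: "f \<in> L2 \<nu>"
  define g where "g = (\<lambda>x. f x - (\<integral>z. f z \<partial>\<nu>))"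
  have g: "g \<in> L2 \<nu>"
    unfolding g_def by (intro L2_diff f finite_measure.L2_const finite_measure_\<nu>)
  have H_g: "H_m m \<nu> f = H_m m \<nu> g" and laplacian_g: "laplacian m f = laplacian m g"
    by (simp_all add: g_def H_m_diff_const laplacian_diff_const)
  have "\<kappa> * Var \<nu> f \<le> H_m m \<nu> f"
    using poincare f by (simp add: poincare_def)
  then have "\<kappa> * L2_inner \<nu> g g \<le> H_m m \<nu> g"
    by (simp add: Var_eq_L2_inner g_def H_m_diff_const)
  then have "\<kappa> * (\<kappa> * L2_inner \<nu> g g) \<le> \<kappa> * H_m m \<nu> g"
    using \<open>0 \<le> \<kappa>\<close> by (rule mult_left_mono)
  moreover have "0 \<le> \<kappa>\<^sup>2 * L2_inner \<nu> g g - 2 * \<kappa> * H_m m \<nu> g + L2_inner \<nu> (laplacian m g) (laplacian m g)"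
    using L2_inner_comb_laplacian[OF g, of \<kappa> 1] L2_inner_self_nonneg[of \<nu> "\<lambda>x. \<kappa> * g x + 1 * laplacian m g x"]
    by simp
  moreover have "\<kappa>\<^sup>2 * L2_inner \<nu> g g = \<kappa> * (\<kappa> * L2_inner \<nu> g g)"
    by (simp add: power2_eq_square)
  ultimately show "\<kappa> * H_m m \<nu> f \<le> L2_inner \<nu> (laplacian m f) (laplacian m f)"
    unfolding H_g laplacian_g by linarith
qed

lemma IBE_inf_iff_poincare:
  assumes "ergodic m \<nu>" "0 < \<kappa>"
  shows "IBE_inf m \<nu> \<kappa> \<longleftrightarrow> poincare m \<nu> \<kappa>"
  using IBE_inf_imp_poincare[OF assms] poincare_imp_IBE_inf[of \<kappa>] assms(2) by auto

section \<open>Bakry-Emery curvature and the spectral gap\<close>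

lemma
  assumes f: "f \<in> L2 \<nu>"
  shows integrable_Gamma: "integrable \<nu> (Gamma m f f)"
    and integral_Gamma: "(\<integral>x. Gamma m f f x \<partial>\<nu>) = H_m m \<nu> f"
proof -
  have f1: "laplacian m f \<in> L2 \<nu>"
    by (rule laplacian_L2[OF f])
  have ff: "integrable \<nu> (\<lambda>x. f x * f x)" and ff1: "integrable \<nu> (\<lambda>x. f x * laplacian m f x)"
    using f f1 by (simp_all add: L2_integrable_mult)
  have Gamma_eq: "Gamma m f f = (\<lambda>x. 1/2 * laplacian m (\<lambda>z. f z * f z) x - f x * laplacian m f x)"
    by (simp add: Gamma_def[abs_def] algebra_simps)
  show "integrable \<nu> (Gamma m f f)"
    unfolding Gamma_eq using integrable_laplacian[OF ff] ff1 by simp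
  have "(\<integral>x. Gamma m f f x \<partial>\<nu>) = - L2_inner \<nu> f (laplacian m f)"
    unfolding Gamma_eq using integrable_laplacian[OF ff] integral_laplacian[OF ff] ff1 by (simp add: L2_inner_def)
  then show "(\<integral>x. Gamma m f f x \<partial>\<nu>) = H_m m \<nu> f"
    by (simp add: H_m_eq_L2_inner_laplacian[OF f] L2_inner_commute)
qed

lemma
  assumes f: "f \<in> L2 \<nu>"
  shows integrable_Gamma2: "integrable \<nu> (Gamma2 m f)"
    and integral_Gamma2: "(\<integral>x. Gamma2 m f x \<partial>\<nu>) = L2_inner \<nu> (laplacian m f) (laplacian m f)"
proof -
  define f1 f2 where "f1 = laplacian m f" and "f2 = laplacian m f1"
  have L2: "f1 \<in> L2 \<nu>" "f2 \<in> L2 \<nu>"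
    using f by (simp_all add: f1_def f2_def laplacian_L2)
  have int: "integrable \<nu> (\<lambda>x. f x * f1 x)" "integrable \<nu> (\<lambda>x. f x * f2 x)" "integrable \<nu> (\<lambda>x. f1 x * f1 x)"
    using f L2 by (simp_all add: L2_integrable_mult)
  have Gamma2_eq: "Gamma2 m f = (\<lambda>x. 1/2 * laplacian m (Gamma m f f) x
      - 1/2 * (laplacian m (\<lambda>z. f z * f1 z) x - f x * f2 x - f1 x * f1 x))"
    by (simp add: Gamma2_def[abs_def] Gamma_def f1_def f2_def)
  show "integrable \<nu> (Gamma2 m f)"
    unfolding Gamma2_eq using integrable_laplacian[OF integrable_Gamma[OF f]] integrable_laplacian[OF int(1)] int
    by simp
  have "(\<integral>x. Gamma2 m f x \<partial>\<nu>) = 1/2 * (L2_inner \<nu> f f2 + L2_inner \<nu> f1 f1)"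
    unfolding Gamma2_eq
    using integrable_laplacian[OF integrable_Gamma[OF f]] integral_laplacian[OF integrable_Gamma[OF f]]
      integrable_laplacian[OF int(1)] integral_laplacian[OF int(1)] int
    by (simp add: L2_inner_def field_simps)
  also have "L2_inner \<nu> f f2 = L2_inner \<nu> f1 f1"
    using laplacian_self_adjoint[OF f L2(1)] by (simp add: f1_def f2_def)
  finally show "(\<integral>x. Gamma2 m f x \<partial>\<nu>) = L2_inner \<nu> (laplacian m f) (laplacian m f)"
    by (simp add: f1_def)
qed

lemma BE_inf_imp_IBE_inf:
  assumes "BE_inf m \<nu> K"
  shows "IBE_inf m \<nu> K"
  unfolding IBE_inf_iff
proof
  fix f assume f: "f \<in> L2 \<nu>"
  have "(\<integral>x. K * Gamma m f f x \<partial>\<nu>) \<le> (\<integral>x. Gamma2 m f x \<partial>\<nu>)"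
    using assms f integrable_Gamma[OF f] integrable_Gamma2[OF f]
    by (intro integral_mono_AE) (auto simp: BE_inf_def)
  then show "K * H_m m \<nu> f \<le> L2_inner \<nu> (laplacian m f) (laplacian m f)"
    by (simp add: integral_Gamma[OF f] integral_Gamma2[OF f])
qed

lemma BE_imp_IBE:
  assumes "BE m \<nu> K n" "1 < n"
  shows "IBE m \<nu> K n"
  unfolding IBE_def
proof
  fix f assume f: "f \<in> L2 \<nu>"
  let ?D = "L2_inner \<nu> (laplacian m f) (laplacian m f)"
  have "(\<integral>x. 1/n * (laplacian m f x)\<^sup>2 + K * Gamma m f f x \<partial>\<nu>) \<le> (\<integral>x. Gamma2 m f x \<partial>\<nu>)"
    using assms(1) f L2_integrable_square[OF laplacian_L2[OF f]] integrable_Gamma[OF f] integrable_Gamma2[OF f]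
    by (intro integral_mono_AE) (auto simp: BE_def)
  then have "1/n * ?D + K * H_m m \<nu> f \<le> ?D"
    using L2_integrable_square[OF laplacian_L2[OF f]] integrable_Gamma[OF f]
    by (simp add: integral_Gamma[OF f] integral_Gamma2[OF f] L2_inner_self)
  then have "n * (1/n * ?D + K * H_m m \<nu> f) \<le> n * ?D"
    using assms(2) by (intro mult_left_mono) simp_all
  then have "n * (K * H_m m \<nu> f) \<le> (n - 1) * ?D"
    using assms(2) by (simp add: distrib_left left_diff_distrib)
  then have "K * (n / (n - 1)) * H_m m \<nu> f \<le> ?D"
    using assms(2) by (simp add: pos_divide_le_eq mult_ac)
  then show "K * (n / (n - 1)) * H_m m \<nu> f \<le> (\<integral>x. (laplacian m f x)\<^sup>2 \<partial>\<nu>)"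
    by (simp add: L2_inner_self)
qed

end

lemma IBE_eq_IBE_inf: "IBE m \<nu> K n = IBE_inf m \<nu> (K * (n / (n - 1)))"
  by (simp add: IBE_def IBE_inf_def)

lemma poincare_imp_gap:
  assumes "poincare m \<nu> \<kappa>"
  shows "ereal \<kappa> \<le> gap m \<nu>"
  unfolding gap_def
proof (rule INF_greatest)
  fix f assume "f \<in> {f \<in> L2 \<nu>. Var \<nu> f \<noteq> 0}"
  then have f: "f \<in> L2 \<nu>" and "0 < Var \<nu> f"
    using Var_nonneg[of \<nu> f] by auto
  then show "ereal \<kappa> \<le> ereal (H_m m \<nu> f / Var \<nu> f)"
    using assms by (simp add: poincare_def le_divide_eq)
qed

theorem theorem3p18:
  fixes m :: "'a::polish_space \<Rightarrow> 'a measure" and \<nu> :: "'a measure"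
  assumes "mrw_space m"
    and "prob_space \<nu>" and "sets \<nu> = sets borel"
    and "invariant_measure m \<nu>" and "reversible_measure m \<nu>"
    and "ergodic m \<nu>"
  shows "(\<forall>K n. K > 0 \<longrightarrow> n > 1 \<longrightarrow> (IBE m \<nu> K n \<longleftrightarrow> poincare m \<nu> (K * (n / (n - 1)))))
       \<and> (\<forall>K. K > 0 \<longrightarrow> (IBE_inf m \<nu> K \<longleftrightarrow> poincare m \<nu> K))
       \<and> (\<forall>K n. K > 0 \<longrightarrow> n > 1 \<longrightarrow> BE m \<nu> K n \<longrightarrow> gap m \<nu> \<ge> ereal (K * (n / (n - 1))))
       \<and> (\<forall>K. K > 0 \<longrightarrow> BE_inf m \<nu> K \<longrightarrow> gap m \<nu> \<ge> ereal K)"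
proof -
  interpret reversible_mrw_space m \<nu>
    by (rule reversible_mrw_space.intro) (fact assms)+
  have IBE_characterisation: "IBE m \<nu> K n \<longleftrightarrow> poincare m \<nu> (K * (n / (n - 1)))" if "K > 0" "n > 1" for K n :: real
    using IBE_inf_iff_poincare[OF assms(6), of "K * (n / (n - 1))"] that by (simp add: IBE_eq_IBE_inf)
  have IBE_inf_characterisation: "IBE_inf m \<nu> K \<longleftrightarrow> poincare m \<nu> K" if "K > 0" for K :: real
    using IBE_inf_iff_poincare[OF assms(6) that] .
  show ?thesis
    using IBE_characterisation IBE_inf_characterisation BE_imp_IBE BE_inf_imp_IBE_inf poincare_imp_gap by blast
qed

end
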